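(* For every extended regular nondeterministic nominal automaton (ERNNA) $A$ there exists a bar formula $\phi$ such that $[\![\phi]\!]=L_\alpha(A)$.
   Context: Names $\mathbb{A}$ (countably infinite), the group $G$ of finite permutations of $\mathbb{A}$, nominal sets (sets with $G$-action where each element has a finite support; $\mathrm{supp}(x)$ least support), orbits, orbit-finiteness, equivariance as usual. Abstraction set $[\mathbb{A}]X$: $\mathbb{A}\times X$ modulo $(a,x)\sim(b,y)$ iff $(a\,c)\cdot x=(b\,c)\cdot y$ for some $c$ outside the supports of $a,x,b,y$; class written $\langle a\rangle x$. $\overline{\mathbb{A}}=\mathbb{A}\cup\{|a\mid a\in\mathbb{A}\}$, bar strings are words over $\overline{\mathbb{A}}$ with letterwise action; $\equiv_\alpha$ is the least equivalence with $w|av\equiv_\alpha w|bu$ whenever $\langle a\rangle v=\langle b\rangle u$ in $[\mathbb{A}]\overline{\mathbb{A}}^*$. Free occurrence of plain $a$: no $|a$ to its left; $\mathrm{FN}(w)$; $[S]=\{w\mid\mathrm{FN}(w)\subseteq S\}$. Bar formulae: $\phi::=\epsilon\mid\neg\epsilon\mid\phi\wedge\phi\mid\phi\vee\phi\mid\Diamond_\sigma\phi\mid\Box_\sigma\phi\mid X\mid\mu X.\phi$ ($\sigma\in\overline{\mathbb{A}}$), with all free occurrences of $X$ in $\phi$ in the scope of a modality in $\mu X.\phi$; $\top=\epsilon\vee\neg\epsilon$. Free names $\mathrm{FN}(\phi)$: names $a$ with some $\Diamond_a/\Box_a$ outside the scope of all $\Diamond_{|a}/\Box_{|a}$. Fixpoint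 variables implicitly annotated with the free names of their binding $\mu$-expression. Semantics $S,w\models\phi$ for finite $S\supseteq\mathrm{FN}(\phi)$, $w\in[S]$: Booleans usual; $\epsilon$ iff $w$ empty; $\neg\epsilon$ iff nonempty; $\mu X.\phi$ iff $S,w\models\phi[\mu X.\phi/X]$; $\Diamond_a\phi$ iff $w=av$, $S,v\models\phi$; $\Box_a\phi$ iff ($w=av\Rightarrow S,v\models\phi$); $\Diamond_{|a}\phi$ iff exist $\psi,v,b$ with $w\equiv_\alpha|bv$, $\langle a\rangle\phi=\langle b\rangle\psi$, $S\cup\{b\},v\models\psi$; $\Box_{|a}\phi$ iff for all $\psi,v,b$ with $w\equiv_\alpha|bv$ and $\langle a\rangle\phi=\langle b\rangle\psi$, $S\cup\{b\},v\models\psi$. $[\![\phi]\!]=\{w\in[\emptyset]\mid\emptyset,w\models\phi\}/{\equiv_\alpha}$. ERNNA $A=(Q,\to,s,f)$: $Q$ orbit-finite nominal set; $s\in Q$ with $\mathrm{supp}(s)=\emptyset$; equivariant $\to\subseteq Q\times(\overline{\mathbb{A}}\cup\{\epsilon\})\times Q$; equivariant $f:Q\to\{0,1,\top\}$; $q\xrightarrow{|a}q'$ and $\langle a\rangle q'=\langle b\rangle q''$ imply $q\xrightarrow{|b}q''$; for each $q$ the sets $\{(a,q')\mid q\xrightarrow{a}q'\}$, $\{q'\mid q\xrightarrow{\epsilon}q'\}$, $\{\langle a\rangle q'\mid q\xrightarrow{|a}q'\}$ are finite; every $q$ with $f(q)=\top$ has empty support and no outgoing transitions. With $\to$ extended to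 words, $L_{pre}(A)=\{(w,f(q))\mid s\xrightarrow{w}q, f(q)\in\{1,\top\}\}$, $L_0(A)=[\emptyset]\cap(\{w\mid(w,1)\in L_{pre}(A)\}\cup\{vu\mid(v,\top)\in L_{pre}(A),u\in\overline{\mathbb{A}}^*\})$, $L_\alpha(A)=L_0(A)/{\equiv_\alpha}$. *)

theory Defs
  imports Main "HOL-Combinatorics.Perm"
begin

text \<open>Names: the countably infinite set nat. G: finite permutations of names, i.e. the type
  nat perm of HOL-Combinatorics (bijections moving only finitely many points).\<close>

type_synonym name = nat

definition supports :: "(name perm \<Rightarrow> 'x \<Rightarrow> 'x) \<Rightarrow> name set \<Rightarrow> 'x \<Rightarrow> bool" where
  "supports act S x \<longleftrightarrow> (\<forall>\<pi>. (\<forall>a\<in>S. Perm.apply \<pi> a = a) \<longrightarrow> act \<pi> x = x)"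

definition fin_supp :: "(name perm \<Rightarrow> 'x \<Rightarrow> 'x) \<Rightarrow> 'x \<Rightarrow> bool" where
  "fin_supp act x \<longleftrightarrow> (\<exists>S. finite S \<and> supports act S x)"

text \<open>Least support (for finitely supported x this is the least finite support).\<close>
definition supp :: "(name perm \<Rightarrow> 'x \<Rightarrow> 'x) \<Rightarrow> 'x \<Rightarrow> name set" where
  "supp act x = \<Inter>{S. finite S \<and> supports act S x}"

definition nominal_set :: "(name perm \<Rightarrow> 'x \<Rightarrow> 'x) \<Rightarrow> 'x set \<Rightarrow> bool" where
  "nominal_set act X \<longleftrightarrow>
     (\<forall>x\<in>X. act 1 x = x) \<and>
     (\<forall>\<pi> \<sigma>. \<forall>x\<in>X. act (\<pi> * \<sigma>) x = act \<pi> (act \<sigma> x)) \<and>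
     (\<forall>\<pi>. \<forall>x\<in>X. act \<pi> x \<in> X) \<and>
     (\<forall>x\<in>X. fin_supp act x)"

definition nom_orbit :: "(name perm \<Rightarrow> 'x \<Rightarrow> 'x) \<Rightarrow> 'x \<Rightarrow> 'x set" where
  "nom_orbit act x = range (\<lambda>\<pi>. act \<pi> x)"

definition orbit_finite :: "(name perm \<Rightarrow> 'x \<Rightarrow> 'x) \<Rightarrow> 'x set \<Rightarrow> bool" where
  "orbit_finite act X \<longleftrightarrow> finite (nom_orbit act ` X)"

text \<open>Equality of abstractions: \<langle>a\<rangle>x = \<langle>b\<rangle>y in [A]X (the support of a name a is {a}).\<close>
definition abs_eq :: "(name perm \<Rightarrow> 'x \<Rightarrow> 'x) \<Rightarrow> name \<Rightarrow> 'x \<Rightarrow> name \<Rightarrow> 'x \<Rightarrow> bool" where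
  "abs_eq act a x b y \<longleftrightarrow>
     (\<exists>c. c \<noteq> a \<and> c \<noteq> b \<and> c \<notin> supp act x \<and> c \<notin> supp act y \<and>
          act (Perm.swap a c) x = act (Perm.swap b c) y)"

text \<open>The abstraction class \<langle>a\<rangle>x, as a set of representatives in A \<times> X.\<close>
definition abs_class :: "(name perm \<Rightarrow> 'x \<Rightarrow> 'x) \<Rightarrow> 'x set \<Rightarrow> name \<Rightarrow> 'x \<Rightarrow> (name \<times> 'x) set" where
  "abs_class act X a x = {(b, y). y \<in> X \<and> abs_eq act a x b y}"

datatype bletter = Plain name | Bar name

fun perm_bl :: "name perm \<Rightarrow> bletter \<Rightarrow> bletter" where
  "perm_bl \<pi> (Plain a) = Plain (Perm.apply \<pi> a)"
| "perm_bl \<pi> (Bar a) = Bar (Perm.apply \<pi> a)"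

definition perm_bs :: "name perm \<Rightarrow> bletter list \<Rightarrow> bletter list" where
  "perm_bs \<pi> w = map (perm_bl \<pi>) w"

inductive alpha_eq :: "bletter list \<Rightarrow> bletter list \<Rightarrow> bool" where
  alpha_refl: "alpha_eq w w"
| alpha_sym: "alpha_eq w u \<Longrightarrow> alpha_eq u w"
| alpha_trans: "alpha_eq w u \<Longrightarrow> alpha_eq u v \<Longrightarrow> alpha_eq w v"
| alpha_step: "abs_eq perm_bs a v b u \<Longrightarrow> alpha_eq (w @ Bar a # v) (w @ Bar b # u)"

definition alpha_rel :: "(bletter list \<times> bletter list) set" where
  "alpha_rel = {(w, u). alpha_eq w u}"

definition FN_bs :: "bletter list \<Rightarrow> name set" where
  "FN_bs w = {a. \<exists>i < length w. w ! i = Plain a \<and> (\<forall>j < i. w ! j \<noteq> Bar a)}"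

definition closed_strings :: "name set \<Rightarrow> bletter list set" where
  "closed_strings S = {w. FN_bs w \<subseteq> S}"

text \<open>Fixpoint variables are natural numbers; each occurrence Var X A carries its annotation A,
  which in a well-formed formula is the set of free names of the binding mu-expression.\<close>
datatype form =
    Eps
  | NEps
  | Conj form form
  | Disj form form
  | Dia bletter form
  | Box bletter form
  | Var nat "name set"
  | Mu nat form

fun perm_form :: "name perm \<Rightarrow> form \<Rightarrow> form" where
  "perm_form \<pi> Eps = Eps"
| "perm_form \<pi> NEps = NEps"
| "perm_form \<pi> (Conj \<phi> \<psi>) = Conj (perm_form \<pi> \<phi>) (perm_form \<pi> \<psi>)"
| "perm_form \<pi> (Disj \<phi> \<psi>) = Disj (perm_form \<pi> \<phi>) (perm_form \<pi> \<psi>)"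
| "perm_form \<pi> (Dia \<sigma> \<phi>) = Dia (perm_bl \<pi> \<sigma>) (perm_form \<pi> \<phi>)"
| "perm_form \<pi> (Box \<sigma> \<phi>) = Box (perm_bl \<pi> \<sigma>) (perm_form \<pi> \<phi>)"
| "perm_form \<pi> (Var X A) = Var X (Perm.apply \<pi> ` A)"
| "perm_form \<pi> (Mu X \<phi>) = Mu X (perm_form \<pi> \<phi>)"

fun FN_form :: "form \<Rightarrow> name set" where
  "FN_form Eps = {}"
| "FN_form NEps = {}"
| "FN_form (Conj \<phi> \<psi>) = FN_form \<phi> \<union> FN_form \<psi>"
| "FN_form (Disj \<phi> \<psi>) = FN_form \<phi> \<union> FN_form \<psi>"
| "FN_form (Dia (Plain a) \<phi>) = insert a (FN_form \<phi>)"
| "FN_form (Dia (Bar a) \<phi>) = FN_form \<phi> - {a}"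
| "FN_form (Box (Plain a) \<phi>) = insert a (FN_form \<phi>)"
| "FN_form (Box (Bar a) \<phi>) = FN_form \<phi> - {a}"
| "FN_form (Var X A) = {}"
| "FN_form (Mu X \<phi>) = FN_form \<phi>"

fun unguarded :: "nat \<Rightarrow> form \<Rightarrow> bool" where
  "unguarded X (Conj \<phi> \<psi>) = (unguarded X \<phi> \<or> unguarded X \<psi>)"
| "unguarded X (Disj \<phi> \<psi>) = (unguarded X \<phi> \<or> unguarded X \<psi>)"
| "unguarded X (Var Y A) = (X = Y)"
| "unguarded X (Mu Y \<phi>) = (X \<noteq> Y \<and> unguarded X \<phi>)"
| "unguarded X _ = False"

fun guarded :: "form \<Rightarrow> bool" where
  "guarded (Conj \<phi> \<psi>) = (guarded \<phi> \<and> guarded \<psi>)"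
| "guarded (Disj \<phi> \<psi>) = (guarded \<phi> \<and> guarded \<psi>)"
| "guarded (Dia \<sigma> \<phi>) = guarded \<phi>"
| "guarded (Box \<sigma> \<phi>) = guarded \<phi>"
| "guarded (Mu X \<phi>) = (\<not> unguarded X \<phi> \<and> guarded \<phi>)"
| "guarded _ = True"

fun well_annotated :: "(nat \<Rightarrow> name set option) \<Rightarrow> form \<Rightarrow> bool" where
  "well_annotated \<Gamma> (Conj \<phi> \<psi>) = (well_annotated \<Gamma> \<phi> \<and> well_annotated \<Gamma> \<psi>)"
| "well_annotated \<Gamma> (Disj \<phi> \<psi>) = (well_annotated \<Gamma> \<phi> \<and> well_annotated \<Gamma> \<psi>)"
| "well_annotated \<Gamma> (Dia \<sigma> \<phi>) = well_annotated \<Gamma> \<phi>"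
| "well_annotated \<Gamma> (Box \<sigma> \<phi>) = well_annotated \<Gamma> \<phi>"
| "well_annotated \<Gamma> (Var X A) = (\<Gamma> X = Some A)"
| "well_annotated \<Gamma> (Mu X \<phi>) = well_annotated (\<Gamma>(X \<mapsto> FN_form (Mu X \<phi>))) \<phi>"
| "well_annotated \<Gamma> _ = True"

definition bar_formula :: "form \<Rightarrow> bool" where
  "bar_formula \<phi> \<longleftrightarrow> guarded \<phi> \<and> well_annotated Map.empty \<phi>"

text \<open>Substitution \<phi>[t/X] (t will always be closed, so no capture can occur).\<close>
fun subst :: "nat \<Rightarrow> form \<Rightarrow> form \<Rightarrow> form" where
  "subst X t (Conj \<phi> \<psi>) = Conj (subst X t \<phi>) (subst X t \<psi>)"
| "subst X t (Disj \<phi> \<psi>) = Disj (subst X t \<phi>) (subst X t \<psi>)"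
| "subst X t (Dia \<sigma> \<phi>) = Dia \<sigma> (subst X t \<phi>)"
| "subst X t (Box \<sigma> \<phi>) = Box \<sigma> (subst X t \<phi>)"
| "subst X t (Var Y A) = (if X = Y then t else Var Y A)"
| "subst X t (Mu Y \<phi>) = (if X = Y then Mu Y \<phi> else Mu Y (subst X t \<phi>))"
| "subst X t Eps = Eps"
| "subst X t NEps = NEps"

text \<open>Satisfaction S, w \<Turnstile> \<phi>. Defined inductively (least fixpoint); by guardedness the
  defining clauses have a unique solution, so this is the semantics of the paper.\<close>
inductive sat :: "name set \<Rightarrow> bletter list \<Rightarrow> form \<Rightarrow> bool" where
  sat_eps: "sat S [] Eps"
| sat_neps: "w \<noteq> [] \<Longrightarrow> sat S w NEps"
| sat_conj: "sat S w \<phi> \<Longrightarrow> sat S w \<psi> \<Longrightarrow> sat S w (Conj \<phi> \<psi>)"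
| sat_disj1: "sat S w \<phi> \<Longrightarrow> sat S w (Disj \<phi> \<psi>)"
| sat_disj2: "sat S w \<psi> \<Longrightarrow> sat S w (Disj \<phi> \<psi>)"
| sat_mu: "sat S w (subst X (Mu X \<phi>) \<phi>) \<Longrightarrow> sat S w (Mu X \<phi>)"
| sat_dia_plain: "sat S v \<phi> \<Longrightarrow> sat S (Plain a # v) (Dia (Plain a) \<phi>)"
| sat_box_plain: "(\<forall>v. w = Plain a # v \<longrightarrow> sat S v \<phi>) \<Longrightarrow> sat S w (Box (Plain a) \<phi>)"
| sat_dia_bar: "alpha_eq w (Bar b # v) \<Longrightarrow> abs_eq perm_form a \<phi> b \<psi> \<Longrightarrow> sat (insert b S) v \<psi>
                \<Longrightarrow> sat S w (Dia (Bar a) \<phi>)"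
| sat_box_bar: "(\<forall>\<psi> v b. alpha_eq w (Bar b # v) \<and> abs_eq perm_form a \<phi> b \<psi>
                   \<longrightarrow> sat (insert b S) v \<psi>)
                \<Longrightarrow> sat S w (Box (Bar a) \<phi>)"

definition sem :: "form \<Rightarrow> bletter list set set" where
  "sem \<phi> = {w \<in> closed_strings {}. sat {} w \<phi>} // alpha_rel"

datatype fval = F0 | F1 | FTop

text \<open>Transitions labelled by Some \<sigma> (\<sigma> a bar letter) or None (epsilon).\<close>
fun perm_lbl :: "name perm \<Rightarrow> bletter option \<Rightarrow> bletter option" where
  "perm_lbl \<pi> None = None"
| "perm_lbl \<pi> (Some \<sigma>) = Some (perm_bl \<pi> \<sigma>)"

definition ERNNA ::
  "(name perm \<Rightarrow> 'q \<Rightarrow> 'q) \<Rightarrow> 'q set \<Rightarrow> ('q \<times> bletter option \<times> 'q) set \<Rightarrow> 'q \<Rightarrow> ('q \<Rightarrow> fval) \<Rightarrow> bool"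
  where
  "ERNNA act Q T s f \<longleftrightarrow>
     nominal_set act Q \<and> orbit_finite act Q \<and>
     s \<in> Q \<and> supp act s = {} \<and>
     T \<subseteq> Q \<times> UNIV \<times> Q \<and>
     (\<forall>\<pi> q l q'. (q, l, q') \<in> T \<longrightarrow> (act \<pi> q, perm_lbl \<pi> l, act \<pi> q') \<in> T) \<and>
     (\<forall>\<pi>. \<forall>q\<in>Q. f (act \<pi> q) = f q) \<and>
     (\<forall>q a q' b q''. (q, Some (Bar a), q') \<in> T \<longrightarrow> q'' \<in> Q \<longrightarrow> abs_eq act a q' b q''
        \<longrightarrow> (q, Some (Bar b), q'') \<in> T) \<and>
     (\<forall>q\<in>Q. finite {(a, q'). (q, Some (Plain a), q') \<in> T}) \<and>
     (\<forall>q\<in>Q. finite {q'. (q, None, q') \<in> T}) \<and>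
     (\<forall>q\<in>Q. finite ((\<lambda>(a, q'). abs_class act Q a q') ` {(a, q'). (q, Some (Bar a), q') \<in> T})) \<and>
     (\<forall>q\<in>Q. f q = FTop \<longrightarrow> supp act q = {} \<and> (\<forall>l q'. (q, l, q') \<notin> T))"

inductive steps :: "('q \<times> bletter option \<times> 'q) set \<Rightarrow> 'q \<Rightarrow> bletter list \<Rightarrow> 'q \<Rightarrow> bool"
  for T where
  steps_nil: "steps T q [] q"
| steps_eps: "(q, None, q') \<in> T \<Longrightarrow> steps T q' w q'' \<Longrightarrow> steps T q w q''"
| steps_letter: "(q, Some \<sigma>, q') \<in> T \<Longrightarrow> steps T q' w q'' \<Longrightarrow> steps T q (\<sigma> # w) q''"

definition L_pre :: "('q \<times> bletter option \<times> 'q) set \<Rightarrow> 'q \<Rightarrow> ('q \<Rightarrow> fval) \<Rightarrow> (bletter list \<times> fval) set" where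
  "L_pre T s f = {(w, f q) | w q. steps T s w q \<and> f q \<in> {F1, FTop}}"

definition L_0 :: "('q \<times> bletter option \<times> 'q) set \<Rightarrow> 'q \<Rightarrow> ('q \<Rightarrow> fval) \<Rightarrow> bletter list set" where
  "L_0 T s f = closed_strings {} \<inter>
     ({w. (w, F1) \<in> L_pre T s f} \<union> {v @ u | v u. (v, FTop) \<in> L_pre T s f})"

definition L_alpha :: "('q \<times> bletter option \<times> 'q) set \<Rightarrow> 'q \<Rightarrow> ('q \<Rightarrow> fval) \<Rightarrow> bletter list set set" where
  "L_alpha T s f = L_0 T s f // alpha_rel"

end

theory Submission
  imports Defs "HOL-Library.FuncSet"
begin

text \<open>Up to renaming an orbit-finite automaton has finitely many states, and the states whose
  support lies in a fixed pool of k + 1 names, where k bounds the size of supports, already carry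
  its whole alpha-language: plain letters and epsilon moves create no names, and the name bound
  by a bar transition may be renamed to a pool name that is fresh for the source state. This
  finite automaton is unfolded into a formula as a tree along simple paths, with one mu-binder
  per state, a transition back to a state on the current path becoming the fixpoint variable of
  that state. The formula defines the alpha-language by induction on the length of words: as
  all fixpoint variables are guarded, unfolding a fixpoint only consults its body on shorter
  words.\<close>

unbundle permutation_syntax

section \<open>Permutation actions and supports\<close>

lemma swap_conj: "\<langle>p \<langle>$\<rangle> a \<leftrightarrow> p \<langle>$\<rangle> c\<rangle> * p = p * \<langle>a \<leftrightarrow> c\<rangle>"
proof (rule perm_eqI)
  fix x
  show "(\<langle>p \<langle>$\<rangle> a \<leftrightarrow> p \<langle>$\<rangle> c\<rangle> * p) \<langle>$\<rangle> x = (p * \<langle>a \<leftrightarrow> c\<rangle>) \<langle>$\<rangle> x"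
    by (cases "x = a"; cases "x = c") (auto simp: apply_times apply_inj)
qed

lemma apply_inverse_apply [simp]:
  "inverse p \<langle>$\<rangle> (p \<langle>$\<rangle> a) = a" "p \<langle>$\<rangle> (inverse p \<langle>$\<rangle> a) = a"
  by (simp_all add: apply_sequence)

lemma swap_swap_fresh:
  "x \<noteq> d \<Longrightarrow> x \<noteq> d' \<Longrightarrow> (\<langle>d \<leftrightarrow> d'\<rangle> * \<langle>b \<leftrightarrow> d'\<rangle>) \<langle>$\<rangle> x = \<langle>b \<leftrightarrow> d\<rangle> \<langle>$\<rangle> x"
  by (cases "x = b") (auto simp: apply_times)

lemma swap_image_Diff: "d \<notin> N \<Longrightarrow> (\<langle>$\<rangle>) \<langle>x \<leftrightarrow> d\<rangle> ` N - {d} = N - {x}"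
  by (auto simp: image_iff) (metis apply_swap_same)+

lemma obtain_fresh_name:
  assumes "finite (S :: name set)"
  obtains c where "c \<notin> S"
  using ex_new_if_finite[OF infinite_UNIV_nat assms] by blast

lemma supp_subset: "finite S \<Longrightarrow> supports act S x \<Longrightarrow> supp act x \<subseteq> S"
  unfolding supp_def by blast

lemma supp_eqI:
  assumes "finite N" and "supports act N x"
    and moved: "\<And>a c. a \<in> N \<Longrightarrow> c \<notin> N \<Longrightarrow> act \<langle>a \<leftrightarrow> c\<rangle> x \<noteq> x"
  shows "supp act x = N"
proof
  show "supp act x \<subseteq> N" using assms(1,2) by (rule supp_subset)
  show "N \<subseteq> supp act x" unfolding supp_def
  proof (intro Inter_greatest subsetI, clarify)
    fix a S assume a: "a \<in> N" and S: "finite S" "supports act S x"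
    show "a \<in> S"
    proof (rule ccontr)
      assume "a \<notin> S"
      obtain c where c: "c \<notin> S \<union> N"
        by (rule obtain_fresh_name[of "S \<union> N"]) (use S(1) \<open>finite N\<close> in auto)
      have "\<forall>b\<in>S. \<langle>a \<leftrightarrow> c\<rangle> \<langle>$\<rangle> b = b"
        using \<open>a \<notin> S\<close> c by (metis UnI1 apply_swap_same)
      then have "act \<langle>a \<leftrightarrow> c\<rangle> x = x"
        using S(2) unfolding supports_def by blast
      then show False using moved[OF a] c by blast
    qed
  qed
qed

locale perm_action =
  fixes act :: "name perm \<Rightarrow> 'x \<Rightarrow> 'x" and X :: "'x set"
  assumes act_one [simp]: "x \<in> X \<Longrightarrow> act 1 x = x"
    and act_mult: "x \<in> X \<Longrightarrow> act (p * r) x = act p (act r x)"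
    and act_closed [simp]: "x \<in> X \<Longrightarrow> act p x \<in> X"
begin

lemma act_inverse [simp]:
  "x \<in> X \<Longrightarrow> act (inverse p) (act p x) = x" "x \<in> X \<Longrightarrow> act p (act (inverse p) x) = x"
  by (simp_all flip: act_mult)

lemma act_swap_swap [simp]: "x \<in> X \<Longrightarrow> act \<langle>a \<leftrightarrow> b\<rangle> (act \<langle>a \<leftrightarrow> b\<rangle> x) = x"
  by (simp flip: act_mult)

lemma supports_act:
  assumes x: "x \<in> X" and S: "supports act S x"
  shows "supports act ((\<langle>$\<rangle>) p ` S) (act p x)"
  unfolding supports_def
proof (intro allI impI)
  fix r assume "\<forall>a\<in>(\<langle>$\<rangle>) p ` S. r \<langle>$\<rangle> a = a"
  then have "\<forall>a\<in>S. (inverse p * r * p) \<langle>$\<rangle> a = a"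
    by (simp add: apply_times)
  then have "act (inverse p * r * p) x = x" using S unfolding supports_def by blast
  moreover have "r * p = p * (inverse p * r * p)"
    by (simp add: mult.assoc[symmetric])
  ultimately show "act r (act p x) = act p x"
    using x by (metis act_mult)
qed

lemma supp_act:
  assumes x: "x \<in> X"
  shows "supp act (act p x) = (\<langle>$\<rangle>) p ` supp act x"
proof -
  have "{S. finite S \<and> supports act S (act p x)} = (`) ((\<langle>$\<rangle>) p) ` {S. finite S \<and> supports act S x}"
  proof (rule set_eqI, rule iffI)
    fix S assume S: "S \<in> {S. finite S \<and> supports act S (act p x)}"
    then have "supports act ((\<langle>$\<rangle>) (inverse p) ` S) x"
      using supports_act[of "act p x" S "inverse p"] x by simp
    moreover have "S = (\<langle>$\<rangle>) p ` (\<langle>$\<rangle>) (inverse p) ` S" by (auto simp: image_iff)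
    ultimately show "S \<in> (`) ((\<langle>$\<rangle>) p) ` {S. finite S \<and> supports act S x}"
      using S by blast
  qed (use supports_act[OF x] in blast)
  moreover have "(\<langle>$\<rangle>) p ` \<Inter>\<A> = (\<Inter>S\<in>\<A>. (\<langle>$\<rangle>) p ` S)" for \<A>
    using bij_image_INT[OF bij_apply, of p id \<A>] by simp
  ultimately show ?thesis unfolding supp_def by simp
qed

lemma mem_supp_act_swap:
  "x \<in> X \<Longrightarrow> e \<in> supp act (act \<langle>a \<leftrightarrow> c\<rangle> x) \<longleftrightarrow> \<langle>a \<leftrightarrow> c\<rangle> \<langle>$\<rangle> e \<in> supp act x"
  by (auto simp: supp_act apply_sequence intro: image_eqI[of e _ "\<langle>a \<leftrightarrow> c\<rangle> \<langle>$\<rangle> e"])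

lemma abs_eq_act:
  assumes "x \<in> X" "y \<in> X" and "abs_eq act a x b y"
  shows "abs_eq act (p \<langle>$\<rangle> a) (act p x) (p \<langle>$\<rangle> b) (act p y)"
proof -
  obtain c where c: "c \<noteq> a" "c \<noteq> b" "c \<notin> supp act x" "c \<notin> supp act y"
    "act \<langle>a \<leftrightarrow> c\<rangle> x = act \<langle>b \<leftrightarrow> c\<rangle> y" using assms(3) unfolding abs_eq_def by blast
  have "act \<langle>p \<langle>$\<rangle> a \<leftrightarrow> p \<langle>$\<rangle> c\<rangle> (act p x) = act p (act \<langle>a \<leftrightarrow> c\<rangle> x)"
    "act \<langle>p \<langle>$\<rangle> b \<leftrightarrow> p \<langle>$\<rangle> c\<rangle> (act p y) = act p (act \<langle>b \<leftrightarrow> c\<rangle> y)"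
    using assms(1,2) by (metis act_mult swap_conj)+
  then show ?thesis unfolding abs_eq_def using c assms(1,2)
    by (intro exI[of _ "p \<langle>$\<rangle> c"]) (auto simp: supp_act apply_inj)
qed

lemma abs_eq_same_name: "x \<in> X \<Longrightarrow> y \<in> X \<Longrightarrow> abs_eq act a x a y \<Longrightarrow> x = y"
  unfolding abs_eq_def by (metis act_swap_swap)

end

lemma fin_supp_if_fresh: "c \<notin> supp act x \<Longrightarrow> fin_supp act x"
  unfolding supp_def fin_supp_def by blast

locale nominal = perm_action +
  assumes fin_supp_elem: "x \<in> X \<Longrightarrow> fin_supp act x"
begin

lemma supports_Diff_singleton:
  assumes x: "x \<in> X" and S: "supports act S x" "finite S" and a: "a \<notin> supp act x"
  shows "supports act (S - {a}) x"
  unfolding supports_def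
proof (intro allI impI)
  fix r assume r: "\<forall>b\<in>S - {a}. r \<langle>$\<rangle> b = b"
  obtain S' where S': "finite S'" "supports act S' x" "a \<notin> S'"
    using a unfolding supp_def by blast
  obtain c where c: "c \<notin> S \<union> S' \<union> affected r \<union> {a}"
    by (rule obtain_fresh_name[of "S \<union> S' \<union> affected r \<union> {a}"]) (use S'(1) S(2) in auto)
  have "\<forall>b\<in>S'. \<langle>a \<leftrightarrow> c\<rangle> \<langle>$\<rangle> b = b" using c S'(3) by (metis UnI2 UnCI apply_swap_same)
  then have "act \<langle>a \<leftrightarrow> c\<rangle> x = x" using S'(2) unfolding supports_def by blast
  then have "supports act ((\<langle>$\<rangle>) \<langle>a \<leftrightarrow> c\<rangle> ` S) x"
    using supports_act[OF x S(1), of "\<langle>a \<leftrightarrow> c\<rangle>"] by simp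
  moreover have "\<forall>b\<in>(\<langle>$\<rangle>) \<langle>a \<leftrightarrow> c\<rangle> ` S. r \<langle>$\<rangle> b = b"
  proof
    fix b assume "b \<in> (\<langle>$\<rangle>) \<langle>a \<leftrightarrow> c\<rangle> ` S"
    then obtain y where y: "y \<in> S" "b = \<langle>a \<leftrightarrow> c\<rangle> \<langle>$\<rangle> y" by blast
    show "r \<langle>$\<rangle> b = b"
    proof (cases "y = a")
      case True then show ?thesis using y c by (simp add: in_affected)
    next
      case False
      then have "y \<noteq> c" using c y by auto
      then show ?thesis using False y r by simp
    qed
  qed
  ultimately show "act r x = x" unfolding supports_def by blast
qed

lemma supports_supp: "x \<in> X \<Longrightarrow> supports act (supp act x) x"
  and finite_supp [simp]: "x \<in> X \<Longrightarrow> finite (supp act x)"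
proof -
  assume x: "x \<in> X"
  obtain S where S: "finite S" "supports act S x"
    using fin_supp_elem[OF x] unfolding fin_supp_def by blast
  have shrink: "supports act (S - D) x" if "finite D" "D \<subseteq> S - supp act x" for D
    using that
  proof (induction D rule: finite_induct)
    case (insert a D)
    then have "supports act (S - D - {a}) x"
      using S(1) by (intro supports_Diff_singleton[OF x]) auto
    moreover have "S - insert a D = S - D - {a}" by blast
    ultimately show ?case by simp
  qed (use S in simp)
  have "supports act (S - (S - supp act x)) x" using S(1) by (rule_tac shrink) auto
  moreover have "S - (S - supp act x) = supp act x" using supp_subset[OF S] by auto
  ultimately show "supports act (supp act x) x" by simp
  show "finite (supp act x)" using supp_subset[OF S] S(1) by (rule finite_subset)
qed

lemma act_fixed: "x \<in> X \<Longrightarrow> \<forall>a\<in>supp act x. p \<langle>$\<rangle> a = a \<Longrightarrow> act p x = x"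
  using supports_supp unfolding supports_def by blast

lemma act_cong_supp:
  assumes x: "x \<in> X" and agree: "\<forall>a\<in>supp act x. p \<langle>$\<rangle> a = r \<langle>$\<rangle> a"
  shows "act p x = act r x"
proof -
  have "act (inverse r * p) x = x"
    using agree by (intro act_fixed[OF x]) (simp add: apply_times)
  then have "act r (act (inverse r * p) x) = act r x" by simp
  then show ?thesis by (simp add: act_mult[OF x, symmetric] mult.assoc[symmetric])
qed

lemma act_swap_fresh: "x \<in> X \<Longrightarrow> a \<notin> supp act x \<Longrightarrow> b \<notin> supp act x \<Longrightarrow> act \<langle>a \<leftrightarrow> b\<rangle> x = x"
  by (rule act_fixed) (auto intro!: apply_swap_same)

lemma act_swap_swap_fresh:
  assumes x: "x \<in> X" and d: "d \<notin> supp act x" "d' \<notin> supp act x"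
  shows "act \<langle>d \<leftrightarrow> d'\<rangle> (act \<langle>b \<leftrightarrow> d'\<rangle> x) = act \<langle>b \<leftrightarrow> d\<rangle> x"
  unfolding act_mult[symmetric, OF x]
proof (rule act_cong_supp[OF x], intro ballI)
  fix z assume "z \<in> supp act x"
  then show "(\<langle>d \<leftrightarrow> d'\<rangle> * \<langle>b \<leftrightarrow> d'\<rangle>) \<langle>$\<rangle> z = \<langle>b \<leftrightarrow> d\<rangle> \<langle>$\<rangle> z"
    using d by (intro swap_swap_fresh) auto
qed

lemma abs_eq_refl: "x \<in> X \<Longrightarrow> abs_eq act a x a x"
  unfolding abs_eq_def
  by (rule obtain_fresh_name[of "supp act x \<union> {a}"]) auto

lemma abs_eq_swap:
  assumes x: "x \<in> X" and c: "c \<notin> supp act x \<or> c = a"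
  shows "abs_eq act a x c (act \<langle>a \<leftrightarrow> c\<rangle> x)"
proof -
  obtain e where e: "e \<notin> supp act x \<union> {a, c}"
    by (rule obtain_fresh_name[of "supp act x \<union> {a, c}"]) (use x in auto)
  have eq: "act \<langle>c \<leftrightarrow> e\<rangle> (act \<langle>a \<leftrightarrow> c\<rangle> x) = act \<langle>a \<leftrightarrow> e\<rangle> x"
    unfolding act_mult[symmetric, OF x]
  proof (rule act_cong_supp[OF x], intro ballI)
    fix y assume y: "y \<in> supp act x"
    then have "y \<noteq> e" using e by auto
    consider "y = a" | "y \<noteq> a" "y \<noteq> c" using c y by blast
    then show "(\<langle>c \<leftrightarrow> e\<rangle> * \<langle>a \<leftrightarrow> c\<rangle>) \<langle>$\<rangle> y = \<langle>a \<leftrightarrow> e\<rangle> \<langle>$\<rangle> y"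
      using \<open>y \<noteq> e\<close> e by cases (simp_all add: apply_times)
  qed
  have "e \<notin> supp act (act \<langle>a \<leftrightarrow> c\<rangle> x)" using e x by (simp add: mem_supp_act_swap)
  then show ?thesis unfolding abs_eq_def using e by (intro exI[of _ e] conjI) (simp_all add: eq)
qed

lemma abs_eq_inverse:
  assumes x: "x \<in> X" and y: "y \<in> X" and ab: "abs_eq act a x b y"
  shows "y = act \<langle>a \<leftrightarrow> b\<rangle> x" and "b = a \<or> b \<notin> supp act x"
proof -
  obtain e where e: "e \<noteq> a" "e \<noteq> b" "e \<notin> supp act x" "e \<notin> supp act y"
    and eq: "act \<langle>a \<leftrightarrow> e\<rangle> x = act \<langle>b \<leftrightarrow> e\<rangle> y"
    using ab unfolding abs_eq_def by blast
  have y_eq: "y = act \<langle>b \<leftrightarrow> e\<rangle> (act \<langle>a \<leftrightarrow> e\<rangle> x)" using eq y by simp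
  show fresh: "b = a \<or> b \<notin> supp act x"
  proof (cases "b = a")
    case False
    have "b \<notin> supp act (act \<langle>b \<leftrightarrow> e\<rangle> y)" using e y by (simp add: mem_supp_act_swap)
    then have "b \<notin> supp act (act \<langle>a \<leftrightarrow> e\<rangle> x)" using eq by simp
    then show ?thesis using False e x by (simp add: mem_supp_act_swap)
  qed simp
  show "y = act \<langle>a \<leftrightarrow> b\<rangle> x"
  proof (cases "b = a")
    case True then show ?thesis using y_eq x by simp
  next
    case False
    have "act \<langle>b \<leftrightarrow> e\<rangle> (act \<langle>a \<leftrightarrow> e\<rangle> x) = act \<langle>a \<leftrightarrow> b\<rangle> x"
      unfolding act_mult[symmetric, OF x]
    proof (rule act_cong_supp[OF x], intro ballI)
      fix z assume "z \<in> supp act x"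
      then have "z \<noteq> e" "z \<noteq> b" using e fresh False by auto
      then show "(\<langle>b \<leftrightarrow> e\<rangle> * \<langle>a \<leftrightarrow> e\<rangle>) \<langle>$\<rangle> z = \<langle>a \<leftrightarrow> b\<rangle> \<langle>$\<rangle> z"
        using False e by (cases "z = a") (auto simp: apply_times)
    qed
    then show ?thesis using y_eq by simp
  qed
qed

lemma inj_on_abs_class: "inj_on (abs_class act X a) X"
proof
  fix x y assume xy: "x \<in> X" "y \<in> X" and eq: "abs_class act X a x = abs_class act X a y"
  have "(a, y) \<in> abs_class act X a y" unfolding abs_class_def using xy by (simp add: abs_eq_refl)
  then have "(a, y) \<in> abs_class act X a x" using eq by simp
  then have "abs_eq act a x a y" unfolding abs_class_def by simp
  then show "x = y" using xy by (rule abs_eq_same_name[rotated 2])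
qed

lemma infinite_swap_images:
  assumes x: "x \<in> X" and a: "a \<in> supp act x" and F: "finite F"
  shows "infinite ((\<lambda>d. act \<langle>a \<leftrightarrow> d\<rangle> x) ` (UNIV - (F \<union> supp act x)))"
proof -
  let ?D = "UNIV - (F \<union> supp act x)"
  have "inj_on (\<lambda>d. act \<langle>a \<leftrightarrow> d\<rangle> x) ?D"
  proof
    fix d1 d2 assume d: "d1 \<in> ?D" "d2 \<in> ?D" and eq: "act \<langle>a \<leftrightarrow> d1\<rangle> x = act \<langle>a \<leftrightarrow> d2\<rangle> x"
    have "d1 \<in> supp act (act \<langle>a \<leftrightarrow> d1\<rangle> x)" using a x by (simp add: mem_supp_act_swap)
    then obtain y where "y \<in> supp act x" "d1 = \<langle>a \<leftrightarrow> d2\<rangle> \<langle>$\<rangle> y"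
      using eq x by (auto simp: supp_act)
    then show "d1 = d2" using d by (cases "y = a"; cases "y = d2") auto
  qed
  moreover have "infinite ?D" using F x by (simp add: Diff_infinite_finite infinite_UNIV_nat)
  ultimately show ?thesis by (simp add: finite_image_iff)
qed

lemma orbit_finite_representatives:
  assumes "orbit_finite act X"
  obtains R where "finite R" "R \<subseteq> X" "\<And>x. x \<in> X \<Longrightarrow> \<exists>r\<in>R. \<exists>p. x = act p r"
proof -
  obtain R where R: "R \<subseteq> X" "finite R" "nom_orbit act ` X = nom_orbit act ` R"
    using finite_subset_image[of "nom_orbit act ` X" "nom_orbit act" X] assms
    unfolding orbit_finite_def by blast
  show thesis
  proof (rule that[OF R(2,1)])
    fix x assume x: "x \<in> X"
    then obtain r where "r \<in> R" "nom_orbit act x = nom_orbit act r" using R(3) by blast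
    moreover have "x \<in> nom_orbit act x" unfolding nom_orbit_def using x by (metis act_one rangeI)
    ultimately show "\<exists>r\<in>R. \<exists>p. x = act p r" unfolding nom_orbit_def by auto
  qed
qed

lemma card_supp_bounded:
  assumes "orbit_finite act X"
  shows "\<exists>k. \<forall>x\<in>X. card (supp act x) \<le> k"
proof -
  obtain R where R: "finite R" "R \<subseteq> X" "\<And>x. x \<in> X \<Longrightarrow> \<exists>r\<in>R. \<exists>p. x = act p r"
    using orbit_finite_representatives[OF assms] by blast
  have "card (supp act x) \<le> Max ((\<lambda>r. card (supp act r)) ` R)" if x: "x \<in> X" for x
  proof -
    obtain r p where r: "r \<in> R" "x = act p r" using R(3)[OF x] by blast
    then have "card (supp act x) = card (supp act r)"
      using R(2) by (auto simp: supp_act card_image inj_on_def apply_inj)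
    then show ?thesis using R(1) r(1) by (simp add: Max_ge)
  qed
  then show ?thesis by blast
qed

lemma finite_supp_within:
  assumes "orbit_finite act X" and N: "finite N"
  shows "finite {x\<in>X. supp act x \<subseteq> N}"
proof -
  obtain R where R: "finite R" "R \<subseteq> X" "\<And>x. x \<in> X \<Longrightarrow> \<exists>r\<in>R. \<exists>p. x = act p r"
    using orbit_finite_representatives[OF assms(1)] by blast
  define rename where "rename r h = act (SOME p. \<forall>a\<in>supp act r. p \<langle>$\<rangle> a = h a) r" for r h
  have "{x\<in>X. supp act x \<subseteq> N} \<subseteq> (\<Union>r\<in>R. rename r ` (supp act r \<rightarrow>\<^sub>E N))"
  proof clarify
    fix x assume x: "x \<in> X" "supp act x \<subseteq> N"
    obtain r p where r: "r \<in> R" "x = act p r" using R(3)[OF x(1)] by blast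
    have rX: "r \<in> X" using r(1) R(2) by blast
    define h where "h = restrict ((\<langle>$\<rangle>) p) (supp act r)"
    have "h \<in> supp act r \<rightarrow>\<^sub>E N" using x(2) r(2) rX by (auto simp: h_def supp_act)
    moreover have "rename r h = x"
    proof -
      have "\<forall>a\<in>supp act r. (SOME p'. \<forall>a\<in>supp act r. p' \<langle>$\<rangle> a = h a) \<langle>$\<rangle> a = h a"
        by (rule someI_ex) (auto simp: h_def)
      then have "\<forall>a\<in>supp act r. (SOME p'. \<forall>a\<in>supp act r. p' \<langle>$\<rangle> a = h a) \<langle>$\<rangle> a = p \<langle>$\<rangle> a"
        by (simp add: h_def)
      then show ?thesis unfolding rename_def r(2) by (rule act_cong_supp[OF rX])
    qed
    ultimately show "x \<in> (\<Union>r\<in>R. rename r ` (supp act r \<rightarrow>\<^sub>E N))" using r(1) by blast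
  qed
  moreover have "finite (\<Union>r\<in>R. rename r ` (supp act r \<rightarrow>\<^sub>E N))"
    using R(1,2) N by (blast intro: finite_imageI finite_PiE finite_supp)
  ultimately show ?thesis by (rule finite_subset)
qed

end

lemma nominal_set_nominal: "nominal_set act X \<Longrightarrow> nominal act X"
  unfolding nominal_set_def nominal_def nominal_axioms_def perm_action_def by blast

lemma nominal_finitely_supported:
  assumes "perm_action act UNIV"
  shows "nominal act {x. fin_supp act x}"
proof -
  interpret perm_action act UNIV by (fact assms)
  have closed: "fin_supp act (act p x)" if "fin_supp act x" for p x
    using that supports_act unfolding fin_supp_def by blast
  show ?thesis
  proof (intro nominal.intro perm_action.intro nominal_axioms.intro)
  qed (simp_all add: closed act_mult)
qed

section \<open>Bar strings and formulas under renaming\<close>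

fun bl_name :: "bletter \<Rightarrow> name" where
  "bl_name (Plain a) = a"
| "bl_name (Bar a) = a"

definition names_bs :: "bletter list \<Rightarrow> name set" where
  "names_bs w = bl_name ` set w"

fun names_form :: "form \<Rightarrow> name set" where
  "names_form Eps = {}"
| "names_form NEps = {}"
| "names_form (Conj \<phi> \<psi>) = names_form \<phi> \<union> names_form \<psi>"
| "names_form (Disj \<phi> \<psi>) = names_form \<phi> \<union> names_form \<psi>"
| "names_form (Dia \<sigma> \<phi>) = insert (bl_name \<sigma>) (names_form \<phi>)"
| "names_form (Box \<sigma> \<phi>) = insert (bl_name \<sigma>) (names_form \<phi>)"
| "names_form (Var X A) = A"
| "names_form (Mu X \<phi>) = names_form \<phi>"

lemma bl_name_perm [simp]: "bl_name (perm_bl p x) = p \<langle>$\<rangle> (bl_name x)"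
  by (cases x) auto

lemma perm_bl_one [simp]: "perm_bl 1 x = x"
  by (cases x) auto

lemma perm_bl_mult: "perm_bl (p * r) x = perm_bl p (perm_bl r x)"
  by (cases x) (auto simp: apply_times)

lemma perm_bl_cong: "p \<langle>$\<rangle> (bl_name x) = r \<langle>$\<rangle> (bl_name x) \<Longrightarrow> perm_bl p x = perm_bl r x"
  by (cases x) auto

lemma perm_bs_simps [simp]:
  "perm_bs p [] = []" "perm_bs p (x # w) = perm_bl p x # perm_bs p w"
  "perm_bs p (w @ u) = perm_bs p w @ perm_bs p u"
  by (auto simp: perm_bs_def)

lemma length_perm_bs [simp]: "length (perm_bs p w) = length w"
  by (simp add: perm_bs_def)

lemma perm_bs_eq_Nil_iff [simp]: "perm_bs p w = [] \<longleftrightarrow> w = []"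
  by (simp add: perm_bs_def)

lemma names_bs_simps [simp]:
  "names_bs [] = {}" "names_bs (x # w) = insert (bl_name x) (names_bs w)"
  "names_bs (w @ u) = names_bs w \<union> names_bs u"
  by (auto simp: names_bs_def)

lemma finite_names_bs [simp]: "finite (names_bs w)"
  by (simp add: names_bs_def)

lemma names_bs_perm [simp]: "names_bs (perm_bs p w) = (\<langle>$\<rangle>) p ` names_bs w"
  by (induction w) auto

lemma perm_bs_one [simp]: "perm_bs 1 w = w"
  by (induction w) simp_all

lemma perm_bs_mult: "perm_bs (p * r) w = perm_bs p (perm_bs r w)"
  by (induction w) (simp_all add: perm_bl_mult)

lemma perm_bs_cong: "\<forall>a\<in>names_bs w. p \<langle>$\<rangle> a = r \<langle>$\<rangle> a \<Longrightarrow> perm_bs p w = perm_bs r w"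
  by (induction w) (auto intro: perm_bl_cong)

lemma perm_form_one [simp]: "perm_form 1 \<phi> = \<phi>"
  by (induction \<phi>) auto

lemma perm_form_mult: "perm_form (p * r) \<phi> = perm_form p (perm_form r \<phi>)"
  by (induction \<phi>) (auto simp: perm_bl_mult apply_times image_comp)

lemma perm_form_cong: "\<forall>a\<in>names_form \<phi>. p \<langle>$\<rangle> a = r \<langle>$\<rangle> a \<Longrightarrow> perm_form p \<phi> = perm_form r \<phi>"
  by (induction \<phi>) (auto intro: perm_bl_cong)

lemma perm_subst: "perm_form p (subst X t \<phi>) = subst X (perm_form p t) (perm_form p \<phi>)"
  by (induction \<phi>) auto

lemma supports_names_bs: "supports perm_bs (names_bs w) w"
  unfolding supports_def using perm_bs_cong[of w _ 1] by simp

interpretation bs: nominal perm_bs UNIV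
proof unfold_locales
  fix w :: "bletter list" and p r :: "name perm"
  show "perm_bs (p * r) w = perm_bs p (perm_bs r w)" by (fact perm_bs_mult)
  show "fin_supp perm_bs w"
    unfolding fin_supp_def using finite_names_bs supports_names_bs by blast
qed simp_all

lemma supp_bs [simp]: "supp perm_bs w = names_bs w"
proof (rule supp_eqI[OF finite_names_bs supports_names_bs])
  fix a c assume a: "a \<in> names_bs w" and c: "c \<notin> names_bs w"
  have "c \<in> names_bs (perm_bs \<langle>a \<leftrightarrow> c\<rangle> w)"
    unfolding names_bs_perm by (rule rev_image_eqI[OF a]) simp
  show "perm_bs \<langle>a \<leftrightarrow> c\<rangle> w \<noteq> w"
  proof
    assume "perm_bs \<langle>a \<leftrightarrow> c\<rangle> w = w"
    with \<open>c \<in> names_bs (perm_bs \<langle>a \<leftrightarrow> c\<rangle> w)\<close> have "c \<in> names_bs w" by (simp only:)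
    with c show False ..
  qed
qed

interpretation form_action: perm_action perm_form UNIV
  by unfold_locales (simp_all add: perm_form_mult)

text \<open>A formula whose variable annotations are infinite has no finite support, so formulas form
  a nominal set only after restricting to the finitely supported ones.\<close>

interpretation form: nominal perm_form "{\<phi>. fin_supp perm_form \<phi>}"
  by (rule nominal_finitely_supported) (fact form_action.perm_action_axioms)

lemma fin_supp_form: "finite (names_form \<phi>) \<Longrightarrow> fin_supp perm_form \<phi>"
  unfolding fin_supp_def supports_def using perm_form_cong[of \<phi> _ 1] by auto

section \<open>Alpha-equivalence of bar strings\<close>

lemma alpha_eq_eqvt: "alpha_eq w u \<Longrightarrow> alpha_eq (perm_bs p w) (perm_bs p u)"
proof (induction rule: alpha_eq.induct)
  case (alpha_step a v b u w)
  then have "abs_eq perm_bs (p \<langle>$\<rangle> a) (perm_bs p v) (p \<langle>$\<rangle> b) (perm_bs p u)"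
    by (simp add: bs.abs_eq_act)
  then show ?case using alpha_eq.alpha_step by simp
qed (auto intro: alpha_eq.intros)

lemma alpha_eq_Cons: "alpha_eq v v' \<Longrightarrow> alpha_eq (x # v) (x # v')"
proof (induction rule: alpha_eq.induct)
  case (alpha_step a v b u w)
  then show ?case using alpha_eq.alpha_step[of a v b u "x # w"] by simp
qed (auto intro: alpha_eq.intros)

lemma alpha_eq_rename:
  "b' \<notin> names_bs v \<Longrightarrow> alpha_eq (Bar b # v) (Bar b' # perm_bs \<langle>b \<leftrightarrow> b'\<rangle> v)"
  using alpha_eq.alpha_step[of b v b' _ "[]"] bs.abs_eq_swap by simp

lemma alpha_eq_length: "alpha_eq w u \<Longrightarrow> length w = length u"
proof (induction rule: alpha_eq.induct)
  case (alpha_step a v b u w)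
  then obtain c where "perm_bs \<langle>a \<leftrightarrow> c\<rangle> v = perm_bs \<langle>b \<leftrightarrow> c\<rangle> u" unfolding abs_eq_def by blast
  then have "length v = length u" by (metis length_perm_bs)
  then show ?case by simp
qed auto

lemma alpha_rel_class_eq: "alpha_eq w w' \<Longrightarrow> alpha_rel `` {w} = alpha_rel `` {w'}"
  unfolding alpha_rel_def by (auto intro: alpha_eq.alpha_trans alpha_eq.alpha_sym)

lemma bletter_list_cases [case_names Nil Plain Bar]:
  obtains "w = []" | a v where "w = Plain a # v" | b v where "w = Bar b # v"
  by (metis bletter.exhaust neq_Nil_conv)

lemma bletter_list_induct [case_names Nil Plain Bar]:
  "P [] \<Longrightarrow> (\<And>a v. P v \<Longrightarrow> P (Plain a # v)) \<Longrightarrow> (\<And>b v. P v \<Longrightarrow> P (Bar b # v)) \<Longrightarrow> P w"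
  by (induction w) (metis bletter.exhaust)+

text \<open>Alpha-equivalence is inverted through the relation below, which compares first letters
  only: it is an equivalence closed under the generating step, hence contains alpha_eq.\<close>

fun alpha_head :: "bletter list \<Rightarrow> bletter list \<Rightarrow> bool" where
  "alpha_head [] u \<longleftrightarrow> u = []"
| "alpha_head (Plain a # v) u \<longleftrightarrow> (\<exists>v'. u = Plain a # v' \<and> alpha_eq v v')"
| "alpha_head (Bar b # v) u \<longleftrightarrow> (\<exists>c u'. u = Bar c # u' \<and>
     (\<forall>d. d \<notin> names_bs v \<union> names_bs u' \<union> {b, c} \<longrightarrow>
        alpha_eq (perm_bs \<langle>b \<leftrightarrow> d\<rangle> v) (perm_bs \<langle>c \<leftrightarrow> d\<rangle> u')))"

lemma alpha_head_refl: "alpha_head w w"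
  by (cases w rule: bletter_list_cases) (auto intro: alpha_eq.alpha_refl)

lemma alpha_head_sym: "alpha_head w u \<Longrightarrow> alpha_head u w"
  by (induction w u rule: alpha_head.induct) (auto, (blast intro: alpha_eq.alpha_sym)+)

lemma alpha_head_trans:
  assumes "alpha_head w x" and "alpha_head x u"
  shows "alpha_head w u"
  using assms
proof (induction w x rule: alpha_head.induct)
  case (2 a v x)
  then show ?case by (auto, blast intro: alpha_eq.alpha_trans)
next
  case (3 b w' x)
  then obtain c x' where x: "x = Bar c # x'" and wx: "\<forall>d. d \<notin> names_bs w' \<union> names_bs x' \<union> {b, c} \<longrightarrow>
      alpha_eq (perm_bs \<langle>b \<leftrightarrow> d\<rangle> w') (perm_bs \<langle>c \<leftrightarrow> d\<rangle> x')" by auto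
  with 3 obtain e u' where u: "u = Bar e # u'" and xu: "\<forall>d. d \<notin> names_bs x' \<union> names_bs u' \<union> {c, e} \<longrightarrow>
      alpha_eq (perm_bs \<langle>c \<leftrightarrow> d\<rangle> x') (perm_bs \<langle>e \<leftrightarrow> d\<rangle> u')" by auto
  have "alpha_eq (perm_bs \<langle>b \<leftrightarrow> d\<rangle> w') (perm_bs \<langle>e \<leftrightarrow> d\<rangle> u')"
    if d: "d \<notin> names_bs w' \<union> names_bs u' \<union> {b, e}" for d
  proof -
    obtain d' where d': "d' \<notin> names_bs w' \<union> names_bs x' \<union> names_bs u' \<union> {b, c, e, d}"
      by (rule obtain_fresh_name[of "names_bs w' \<union> names_bs x' \<union> names_bs u' \<union> {b, c, e, d}"]) auto
    have "alpha_eq (perm_bs \<langle>b \<leftrightarrow> d'\<rangle> w') (perm_bs \<langle>e \<leftrightarrow> d'\<rangle> u')"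
      using wx xu d' by (blast intro: alpha_eq.alpha_trans)
    then have "alpha_eq (perm_bs \<langle>d \<leftrightarrow> d'\<rangle> (perm_bs \<langle>b \<leftrightarrow> d'\<rangle> w'))
        (perm_bs \<langle>d \<leftrightarrow> d'\<rangle> (perm_bs \<langle>e \<leftrightarrow> d'\<rangle> u'))"
      by (rule alpha_eq_eqvt)
    moreover have "perm_bs \<langle>d \<leftrightarrow> d'\<rangle> (perm_bs \<langle>b \<leftrightarrow> d'\<rangle> w') = perm_bs \<langle>b \<leftrightarrow> d\<rangle> w'"
      "perm_bs \<langle>d \<leftrightarrow> d'\<rangle> (perm_bs \<langle>e \<leftrightarrow> d'\<rangle> u') = perm_bs \<langle>e \<leftrightarrow> d\<rangle> u'"
      using d d' by (simp_all add: bs.act_swap_swap_fresh)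
    ultimately show ?thesis by simp
  qed
  then show ?case using u by auto
qed auto

lemma alpha_head_step: "abs_eq perm_bs a v b u \<Longrightarrow> alpha_head (w @ Bar a # v) (w @ Bar b # u)"
proof (cases w rule: bletter_list_cases)
  case Nil
  assume "abs_eq perm_bs a v b u"
  then obtain e where e: "e \<noteq> a" "e \<noteq> b" "e \<notin> names_bs v" "e \<notin> names_bs u"
    and eq: "perm_bs \<langle>a \<leftrightarrow> e\<rangle> v = perm_bs \<langle>b \<leftrightarrow> e\<rangle> u"
    unfolding abs_eq_def by auto
  have "perm_bs \<langle>a \<leftrightarrow> d\<rangle> v = perm_bs \<langle>b \<leftrightarrow> d\<rangle> u"
    if d: "d \<notin> names_bs v \<union> names_bs u \<union> {a, b}" for d
  proof -
    have "perm_bs \<langle>a \<leftrightarrow> d\<rangle> v = perm_bs \<langle>d \<leftrightarrow> e\<rangle> (perm_bs \<langle>a \<leftrightarrow> e\<rangle> v)"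
      using d e by (simp add: bs.act_swap_swap_fresh)
    also have "\<dots> = perm_bs \<langle>b \<leftrightarrow> d\<rangle> u"
      using d e by (simp add: eq bs.act_swap_swap_fresh)
    finally show ?thesis .
  qed
  then show ?thesis using Nil by (auto intro: alpha_eq.alpha_refl)
next
  case (Plain c w')
  assume "abs_eq perm_bs a v b u"
  then show ?thesis using Plain by (auto intro: alpha_eq.alpha_step)
next
  case (Bar c w')
  assume "abs_eq perm_bs a v b u"
  then have step: "alpha_eq (w' @ Bar a # v) (w' @ Bar b # u)" by (rule alpha_eq.alpha_step)
  show ?thesis using Bar alpha_eq_eqvt[OF step] by auto
qed

lemma alpha_eq_imp_alpha_head: "alpha_eq w u \<Longrightarrow> alpha_head w u"
  by (induction rule: alpha_eq.induct)
    (auto intro: alpha_head_refl alpha_head_sym alpha_head_trans alpha_head_step)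

lemma alpha_eq_NilD: "alpha_eq [] u \<Longrightarrow> u = []"
  using alpha_eq_imp_alpha_head by fastforce

lemma alpha_eq_PlainD: "alpha_eq (Plain a # v) u \<Longrightarrow> \<exists>v'. u = Plain a # v' \<and> alpha_eq v v'"
  using alpha_eq_imp_alpha_head by fastforce

lemma alpha_eq_BarD:
  "alpha_eq (Bar b # v) u \<Longrightarrow> \<exists>c u'. u = Bar c # u' \<and>
     (\<forall>d. d \<notin> names_bs v \<union> names_bs u' \<union> {b, c} \<longrightarrow>
        alpha_eq (perm_bs \<langle>b \<leftrightarrow> d\<rangle> v) (perm_bs \<langle>c \<leftrightarrow> d\<rangle> u'))"
  using alpha_eq_imp_alpha_head by fastforce

lemma FN_bs_Nil [simp]: "FN_bs [] = {}"
  by (simp add: FN_bs_def)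

lemma FN_bs_Plain [simp]: "FN_bs (Plain a # v) = insert a (FN_bs v)"
  unfolding FN_bs_def by (auto simp: Ex_less_Suc2 All_less_Suc2)

lemma FN_bs_Bar [simp]: "FN_bs (Bar b # v) = FN_bs v - {b}"
  unfolding FN_bs_def by (auto simp: Ex_less_Suc2 All_less_Suc2)

lemma FN_bs_subset: "FN_bs w \<subseteq> names_bs w"
  by (induction w rule: bletter_list_induct) auto

lemma FN_bs_perm: "FN_bs (perm_bs p w) = (\<langle>$\<rangle>) p ` FN_bs w"
  by (induction w rule: bletter_list_induct) (auto simp: apply_inj)

lemma alpha_eq_FN_bs: "alpha_eq w u \<Longrightarrow> FN_bs w = FN_bs u"
proof (induction "length w" arbitrary: w u rule: less_induct)
  case less
  show ?case
  proof (cases w rule: bletter_list_cases)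
    case Nil
    then have "u = []" using alpha_eq_NilD less.prems by blast
    then show ?thesis using Nil by simp
  next
    case (Plain a v)
    then obtain v' where "u = Plain a # v'" "alpha_eq v v'"
      using alpha_eq_PlainD less.prems by blast
    then show ?thesis using less.hyps Plain by simp
  next
    case (Bar b v)
    then obtain c u' where u: "u = Bar c # u'" and h: "\<forall>d. d \<notin> names_bs v \<union> names_bs u' \<union> {b, c} \<longrightarrow>
        alpha_eq (perm_bs \<langle>b \<leftrightarrow> d\<rangle> v) (perm_bs \<langle>c \<leftrightarrow> d\<rangle> u')"
      using alpha_eq_BarD less.prems by blast
    obtain d where d: "d \<notin> names_bs v \<union> names_bs u' \<union> {b, c}"
      by (rule obtain_fresh_name[of "names_bs v \<union> names_bs u' \<union> {b, c}"]) auto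
    have "FN_bs (perm_bs \<langle>b \<leftrightarrow> d\<rangle> v) = FN_bs (perm_bs \<langle>c \<leftrightarrow> d\<rangle> u')"
      using less.hyps h d Bar by simp
    then have "(\<langle>$\<rangle>) \<langle>b \<leftrightarrow> d\<rangle> ` FN_bs v - {d} = (\<langle>$\<rangle>) \<langle>c \<leftrightarrow> d\<rangle> ` FN_bs u' - {d}"
      by (simp add: FN_bs_perm)
    moreover have "d \<notin> FN_bs v" "d \<notin> FN_bs u'" using d FN_bs_subset by blast+
    ultimately have "FN_bs v - {b} = FN_bs u' - {c}" by (simp add: swap_image_Diff)
    then show ?thesis using Bar u by simp
  qed
qed

section \<open>Satisfaction\<close>

text \<open>The name set S of the satisfaction relation only records the names in scope; no rule
  inspects it, so it can be changed at will.\<close>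

lemma sat_perm_any_names: "sat S w \<phi> \<Longrightarrow> sat S' (perm_bs p w) (perm_form p \<phi>)"
proof (induction arbitrary: S' p rule: sat.induct)
  case (sat_neps w S)
  then show ?case by (auto intro: sat.sat_neps)
next
  case (sat_mu S w X \<phi>)
  then show ?case by (simp add: sat.sat_mu perm_subst)
next
  case (sat_box_plain w a S \<phi>)
  show ?case
  proof (simp, rule sat.sat_box_plain, intro allI impI)
    fix v assume "perm_bs p w = Plain (p \<langle>$\<rangle> a) # v"
    then have "w = Plain a # perm_bs (inverse p) v"
      using bs.act_inverse(1)[of w p] by simp
    then have "sat S' (perm_bs p (perm_bs (inverse p) v)) (perm_form p \<phi>)"
      using sat_box_plain.IH by blast
    then show "sat S' v (perm_form p \<phi>)" by simp
  qed
next
  case (sat_dia_bar w b v a \<phi> \<psi> S)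
  have "alpha_eq (perm_bs p w) (Bar (p \<langle>$\<rangle> b) # perm_bs p v)"
    using alpha_eq_eqvt[OF sat_dia_bar.hyps(1)] by simp
  moreover have "abs_eq perm_form (p \<langle>$\<rangle> a) (perm_form p \<phi>) (p \<langle>$\<rangle> b) (perm_form p \<psi>)"
    using sat_dia_bar.hyps(2) by (simp add: form_action.abs_eq_act)
  ultimately show ?case using sat_dia_bar.IH by (simp add: sat.sat_dia_bar)
next
  case (sat_box_bar w a \<phi> S)
  show ?case
  proof (simp, rule sat.sat_box_bar, intro allI impI, elim conjE)
    fix \<psi> v b assume al: "alpha_eq (perm_bs p w) (Bar b # v)"
      and ab: "abs_eq perm_form (p \<langle>$\<rangle> a) (perm_form p \<phi>) b \<psi>"
    have "alpha_eq w (Bar (inverse p \<langle>$\<rangle> b) # perm_bs (inverse p) v)"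
      using alpha_eq_eqvt[OF al, of "inverse p"] by simp
    moreover have "abs_eq perm_form a \<phi> (inverse p \<langle>$\<rangle> b) (perm_form (inverse p) \<psi>)"
      using form_action.abs_eq_act[OF _ _ ab, of "inverse p"] by simp
    ultimately have "sat (insert b S') (perm_bs p (perm_bs (inverse p) v))
        (perm_form p (perm_form (inverse p) \<psi>))"
      using sat_box_bar.IH by blast
    then show "sat (insert b S') v \<psi>" by simp
  qed
qed (auto intro: sat.intros)

lemma sat_any_names: "sat S w \<phi> \<Longrightarrow> sat S' w \<phi>"
  using sat_perm_any_names[of S w \<phi> S' 1] by simp

lemma sat_perm_iff: "sat S (perm_bs p w) (perm_form p \<phi>) \<longleftrightarrow> sat S w \<phi>"
  using sat_perm_any_names[of S "perm_bs p w" "perm_form p \<phi>" S "inverse p"]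
    sat_perm_any_names[of S w \<phi> S p]
  by auto

inductive_cases sat_EpsE: "sat S w Eps"
inductive_cases sat_NEpsE: "sat S w NEps"
inductive_cases sat_ConjE: "sat S w (Conj \<phi> \<psi>)"
inductive_cases sat_DisjE: "sat S w (Disj \<phi> \<psi>)"
inductive_cases sat_MuE: "sat S w (Mu X \<phi>)"
inductive_cases sat_Dia_PlainE: "sat S w (Dia (Plain a) \<phi>)"
inductive_cases sat_Dia_BarE: "sat S w (Dia (Bar a) \<phi>)"

lemma sat_Eps_iff [simp]: "sat S w Eps \<longleftrightarrow> w = []"
  by (auto elim: sat_EpsE intro: sat.intros)

lemma sat_NEps_iff [simp]: "sat S w NEps \<longleftrightarrow> w \<noteq> []"
  by (auto elim: sat_NEpsE intro: sat.intros)

lemma sat_Conj_iff [simp]: "sat S w (Conj \<phi> \<psi>) \<longleftrightarrow> sat S w \<phi> \<and> sat S w \<psi>"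
  by (auto elim: sat_ConjE intro: sat.intros)

lemma sat_Disj_iff [simp]: "sat S w (Disj \<phi> \<psi>) \<longleftrightarrow> sat S w \<phi> \<or> sat S w \<psi>"
  by (auto elim: sat_DisjE intro: sat.intros)

lemma sat_Mu_iff: "sat S w (Mu X \<phi>) \<longleftrightarrow> sat S w (subst X (Mu X \<phi>) \<phi>)"
  by (auto elim: sat_MuE intro: sat.intros)

lemma sat_Dia_Plain_iff: "sat S w (Dia (Plain a) \<phi>) \<longleftrightarrow> (\<exists>v. w = Plain a # v \<and> sat S v \<phi>)"
  by (auto elim: sat_Dia_PlainE intro: sat.intros)

lemma sat_Dia_Bar_iff:
  "sat S w (Dia (Bar a) \<phi>) \<longleftrightarrow>
     (\<exists>b v \<psi>. alpha_eq w (Bar b # v) \<and> abs_eq perm_form a \<phi> b \<psi> \<and> sat S v \<psi>)"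
  by (auto elim!: sat_Dia_BarE intro: sat.intros sat_any_names)

lemma sat_Dia_Bar_freshE:
  assumes sat: "sat S w (Dia (Bar c) \<psi>)" and \<psi>: "fin_supp perm_form \<psi>" and F: "finite F"
  obtains d v where "d \<notin> F" "alpha_eq w (Bar d # v)" "sat S (perm_bs \<langle>c \<leftrightarrow> d\<rangle> v) \<psi>"
proof -
  obtain b v \<psi>' where al: "alpha_eq w (Bar b # v)" and ab: "abs_eq perm_form c \<psi> b \<psi>'"
    and sat': "sat S v \<psi>'"
    using sat unfolding sat_Dia_Bar_iff by blast
  have \<psi>': "fin_supp perm_form \<psi>'" using ab unfolding abs_eq_def by (blast intro: fin_supp_if_fresh)
  have \<psi>'_eq: "\<psi>' = perm_form \<langle>c \<leftrightarrow> b\<rangle> \<psi>" and b: "b = c \<or> b \<notin> supp perm_form \<psi>"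
    using form.abs_eq_inverse[OF _ _ ab] \<psi> \<psi>' by simp_all
  obtain d where d: "d \<notin> F \<union> names_bs v \<union> supp perm_form \<psi> \<union> {b, c}"
    by (rule obtain_fresh_name[of "F \<union> names_bs v \<union> supp perm_form \<psi> \<union> {b, c}"]) (use F \<psi> in auto)
  have \<psi>'_swap: "perm_form \<langle>b \<leftrightarrow> d\<rangle> \<psi>' = perm_form \<langle>c \<leftrightarrow> d\<rangle> \<psi>"
  proof (cases "b = c")
    case False
    then show ?thesis
      using \<psi>'_eq b d \<psi> form.act_swap_swap_fresh[of \<psi> d b c] by (simp add: swap_sym)
  qed (simp add: \<psi>'_eq)
  have "sat S (perm_bs \<langle>b \<leftrightarrow> d\<rangle> v) (perm_form \<langle>c \<leftrightarrow> d\<rangle> \<psi>)"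
    using sat' sat_perm_iff[of S "\<langle>b \<leftrightarrow> d\<rangle>" v \<psi>'] unfolding \<psi>'_swap by simp
  then have "sat S (perm_bs \<langle>c \<leftrightarrow> d\<rangle> (perm_bs \<langle>b \<leftrightarrow> d\<rangle> v)) \<psi>"
    using sat_perm_iff[of S "\<langle>c \<leftrightarrow> d\<rangle>" "perm_bs \<langle>c \<leftrightarrow> d\<rangle> (perm_bs \<langle>b \<leftrightarrow> d\<rangle> v)" \<psi>] by simp
  moreover have "alpha_eq w (Bar d # perm_bs \<langle>b \<leftrightarrow> d\<rangle> v)"
    using al alpha_eq_rename[of d v b] d by (blast intro: alpha_eq.alpha_trans)
  ultimately show thesis using that d by blast
qed

lemma sat_Dia_BarI:
  assumes "alpha_eq w (Bar d # v)" and "fin_supp perm_form \<psi>" and "d \<notin> supp perm_form \<psi>"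
    and "sat S (perm_bs \<langle>c \<leftrightarrow> d\<rangle> v) \<psi>"
  shows "sat S w (Dia (Bar c) \<psi>)"
proof -
  have "abs_eq perm_form c \<psi> d (perm_form \<langle>c \<leftrightarrow> d\<rangle> \<psi>)"
    using assms(2,3) by (intro form.abs_eq_swap) auto
  moreover have "sat S v (perm_form \<langle>c \<leftrightarrow> d\<rangle> \<psi>)"
    using assms(4) sat_perm_iff[of S "\<langle>c \<leftrightarrow> d\<rangle>" v "perm_form \<langle>c \<leftrightarrow> d\<rangle> \<psi>"] by simp
  ultimately show ?thesis using assms(1) unfolding sat_Dia_Bar_iff by blast
qed

section \<open>Derived formulas and substitution\<close>

definition false_form :: form where
  "false_form = Conj Eps NEps"

definition true_form :: form where
  "true_form = Disj Eps NEps"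

lemma not_sat_false_form [simp]: "\<not> sat S w false_form"
  by (simp add: false_form_def)

lemma sat_true_form [simp]: "sat S w true_form"
  by (simp add: true_form_def)

fun disj_list :: "form list \<Rightarrow> form" where
  "disj_list [] = false_form"
| "disj_list (\<phi> # \<phi>s) = Disj \<phi> (disj_list \<phi>s)"

lemma sat_disj_list: "sat S w (disj_list \<phi>s) \<longleftrightarrow> (\<exists>\<phi>\<in>set \<phi>s. sat S w \<phi>)"
  by (induction \<phi>s) auto

fun fvars :: "form \<Rightarrow> nat set" where
  "fvars (Conj \<phi> \<psi>) = fvars \<phi> \<union> fvars \<psi>"
| "fvars (Disj \<phi> \<psi>) = fvars \<phi> \<union> fvars \<psi>"
| "fvars (Dia \<sigma> \<phi>) = fvars \<phi>"
| "fvars (Box \<sigma> \<phi>) = fvars \<phi>"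
| "fvars (Var X A) = {X}"
| "fvars (Mu X \<phi>) = fvars \<phi> - {X}"
| "fvars Eps = {}"
| "fvars NEps = {}"

fun msubst :: "(nat \<Rightarrow> form option) \<Rightarrow> form \<Rightarrow> form" where
  "msubst \<sigma> (Conj \<phi> \<psi>) = Conj (msubst \<sigma> \<phi>) (msubst \<sigma> \<psi>)"
| "msubst \<sigma> (Disj \<phi> \<psi>) = Disj (msubst \<sigma> \<phi>) (msubst \<sigma> \<psi>)"
| "msubst \<sigma> (Dia x \<phi>) = Dia x (msubst \<sigma> \<phi>)"
| "msubst \<sigma> (Box x \<phi>) = Box x (msubst \<sigma> \<phi>)"
| "msubst \<sigma> (Var X A) = (case \<sigma> X of Some t \<Rightarrow> t | None \<Rightarrow> Var X A)"
| "msubst \<sigma> (Mu X \<phi>) = Mu X (msubst (\<sigma>(X := None)) \<phi>)"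
| "msubst \<sigma> Eps = Eps"
| "msubst \<sigma> NEps = NEps"

lemma subst_fresh: "X \<notin> fvars t \<Longrightarrow> subst X u t = t"
  by (induction t) auto

lemma msubst_fresh: "\<forall>Y\<in>fvars \<phi>. \<sigma> Y = None \<Longrightarrow> msubst \<sigma> \<phi> = \<phi>"
  by (induction \<phi> arbitrary: \<sigma>) (auto split: option.splits)

lemma subst_msubst:
  assumes "\<forall>Y t. \<sigma> Y = Some t \<longrightarrow> X \<notin> fvars t" and "\<sigma> X = None"
  shows "subst X t (msubst \<sigma> \<phi>) = msubst (\<sigma>(X \<mapsto> t)) \<phi>"
  using assms
proof (induction \<phi> arbitrary: \<sigma>)
  case (Var Y A)
  then show ?case by (cases "\<sigma> Y") (auto simp: subst_fresh)
next
  case (Mu Y \<phi>)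
  show ?case
  proof (cases "X = Y")
    case True
    then have "(\<sigma>(X \<mapsto> t))(Y := None) = \<sigma>(Y := None)" by simp
    then show ?thesis using True by (simp only: msubst.simps subst.simps if_True refl)
  next
    case False
    then have "(\<sigma>(Y := None))(X \<mapsto> t) = (\<sigma>(X \<mapsto> t))(Y := None)" by auto
    moreover have "subst X t (msubst (\<sigma>(Y := None)) \<phi>) = msubst ((\<sigma>(Y := None))(X \<mapsto> t)) \<phi>"
      using Mu.prems False by (intro Mu.IH) auto
    ultimately show ?thesis using False by (simp only: msubst.simps subst.simps if_False)
  qed
qed auto

lemma fvars_msubst:
  "\<forall>Y t. \<sigma> Y = Some t \<longrightarrow> fvars t = {} \<Longrightarrow> fvars (msubst \<sigma> \<phi>) \<subseteq> {Y\<in>fvars \<phi>. \<sigma> Y = None}"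
proof (induction \<phi> arbitrary: \<sigma>)
  case (Var Y A)
  then show ?case by (cases "\<sigma> Y") auto
next
  case (Mu Y \<phi>)
  have "fvars (msubst (\<sigma>(Y := None)) \<phi>) \<subseteq> {Z\<in>fvars \<phi>. (\<sigma>(Y := None)) Z = None}"
    using Mu.prems by (intro Mu.IH) auto
  then show ?case by auto
qed auto

lemma names_msubst:
  "names_form (msubst \<sigma> \<phi>) \<subseteq>
     names_form \<phi> \<union> (\<Union>Y\<in>fvars \<phi>. case \<sigma> Y of None \<Rightarrow> {} | Some t \<Rightarrow> names_form t)"
proof (induction \<phi> arbitrary: \<sigma>)
  case (Var Y A)
  then show ?case by (cases "\<sigma> Y") auto
next
  case (Mu Y \<phi>)
  have "names_form (msubst (\<sigma>(Y := None)) \<phi>) \<subseteq>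
      names_form \<phi> \<union> (\<Union>Z\<in>fvars \<phi>. case (\<sigma>(Y := None)) Z of None \<Rightarrow> {} | Some t \<Rightarrow> names_form t)"
    by (rule Mu.IH)
  also have "\<dots> \<subseteq> names_form \<phi> \<union>
      (\<Union>Z\<in>fvars \<phi> - {Y}. case \<sigma> Z of None \<Rightarrow> {} | Some t \<Rightarrow> names_form t)"
    by (auto split: option.splits if_splits)
  finally show ?case by simp
next
  case (Conj \<phi>1 \<phi>2)
  then show ?case by (simp, blast)
next
  case (Disj \<phi>1 \<phi>2)
  then show ?case by (simp, blast)
qed auto

lemma finite_names_msubst:
  assumes "finite (names_form \<phi>)" and "\<forall>Y t. \<sigma> Y = Some t \<longrightarrow> finite (names_form t)"
  shows "finite (names_form (msubst \<sigma> \<phi>))"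
proof -
  have "finite (\<Union>Y\<in>fvars \<phi>. case \<sigma> Y of None \<Rightarrow> {} | Some t \<Rightarrow> names_form t)"
  proof (rule finite_UN_I)
    show "finite (fvars \<phi>)" by (induction \<phi>) auto
  qed (use assms(2) in \<open>auto split: option.splits\<close>)
  with assms(1) show ?thesis by (intro finite_subset[OF names_msubst]) simp
qed

lemma subst_disj_list: "subst X t (disj_list \<phi>s) = disj_list (map (subst X t) \<phi>s)"
  by (induction \<phi>s) (auto simp: false_form_def)

lemma msubst_disj_list: "msubst \<sigma> (disj_list \<phi>s) = disj_list (map (msubst \<sigma>) \<phi>s)"
  by (induction \<phi>s) (auto simp: false_form_def)

lemma fvars_disj_list: "fvars (disj_list \<phi>s) = (\<Union>\<phi>\<in>set \<phi>s. fvars \<phi>)"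
  by (induction \<phi>s) (auto simp: false_form_def)

lemma names_disj_list: "names_form (disj_list \<phi>s) = (\<Union>\<phi>\<in>set \<phi>s. names_form \<phi>)"
  by (induction \<phi>s) (auto simp: false_form_def)

lemma FN_disj_list: "FN_form (disj_list \<phi>s) = (\<Union>\<phi>\<in>set \<phi>s. FN_form \<phi>)"
  by (induction \<phi>s) (auto simp: false_form_def)

lemma guarded_disj_list: "guarded (disj_list \<phi>s) \<longleftrightarrow> (\<forall>\<phi>\<in>set \<phi>s. guarded \<phi>)"
  by (induction \<phi>s) (auto simp: false_form_def)

lemma unguarded_disj_list: "unguarded X (disj_list \<phi>s) \<longleftrightarrow> (\<exists>\<phi>\<in>set \<phi>s. unguarded X \<phi>)"
  by (induction \<phi>s) (auto simp: false_form_def)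

lemma well_annotated_disj_list:
  "well_annotated \<Gamma> (disj_list \<phi>s) \<longleftrightarrow> (\<forall>\<phi>\<in>set \<phi>s. well_annotated \<Gamma> \<phi>)"
  by (induction \<phi>s) (auto simp: false_form_def)

section \<open>Extended regular nondeterministic nominal automata\<close>

locale ernna =
  fixes act :: "name perm \<Rightarrow> 'q \<Rightarrow> 'q" and Q :: "'q set"
    and T :: "('q \<times> bletter option \<times> 'q) set" and s :: 'q and f :: "'q \<Rightarrow> fval"
  assumes ERNNA: "ERNNA act Q T s f"

sublocale ernna \<subseteq> nominal act Q
  by (rule nominal_set_nominal) (use ERNNA in \<open>simp add: ERNNA_def\<close>)

context ernna
begin

lemma orbit_finite_states: "orbit_finite act Q"
  and start_state: "s \<in> Q"
  and supp_start: "supp act s = {}"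
  and trans_states: "(q, l, q') \<in> T \<Longrightarrow> q \<in> Q \<and> q' \<in> Q"
  and trans_eqvt: "(q, l, q') \<in> T \<Longrightarrow> (act p q, perm_lbl p l, act p q') \<in> T"
  and final_eqvt: "q \<in> Q \<Longrightarrow> f (act p q) = f q"
  and bar_trans_alpha: "(q, Some (Bar a), q') \<in> T \<Longrightarrow> q'' \<in> Q \<Longrightarrow> abs_eq act a q' b q''
     \<Longrightarrow> (q, Some (Bar b), q'') \<in> T"
  and finite_plain_trans: "q \<in> Q \<Longrightarrow> finite {(a, q'). (q, Some (Plain a), q') \<in> T}"
  and finite_eps_trans: "q \<in> Q \<Longrightarrow> finite {q'. (q, None, q') \<in> T}"
  and finite_bar_trans: "q \<in> Q \<Longrightarrow>
     finite ((\<lambda>(a, q'). abs_class act Q a q') ` {(a, q'). (q, Some (Bar a), q') \<in> T})"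
  using ERNNA unfolding ERNNA_def by blast+

text \<open>Finite branching forbids a successor to have a name that is fresh for its source,
  apart from the name bound by a bar transition: otherwise renaming that name would
  produce infinitely many successors.\<close>

lemma supp_eps_succ:
  assumes tr: "(q, None, q') \<in> T"
  shows "supp act q' \<subseteq> supp act q"
proof
  fix x assume x: "x \<in> supp act q'"
  have q: "q \<in> Q" "q' \<in> Q" using trans_states[OF tr] by auto
  show "x \<in> supp act q"
  proof (rule ccontr)
    assume "x \<notin> supp act q"
    then have "act \<langle>x \<leftrightarrow> d\<rangle> q' \<in> {q'. (q, None, q') \<in> T}" if "d \<notin> supp act q" for d
      using trans_eqvt[OF tr, of "\<langle>x \<leftrightarrow> d\<rangle>"] act_swap_fresh[OF q(1)] that by simp
    then have "(\<lambda>d. act \<langle>x \<leftrightarrow> d\<rangle> q') ` (UNIV - (supp act q \<union> supp act q')) \<subseteq> {q'. (q, None, q') \<in> T}"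
      by blast
    then show False
      using infinite_swap_images[OF q(2) x, of "supp act q"] finite_eps_trans[OF q(1)] q(1)
      by (meson finite_subset finite_supp)
  qed
qed

lemma plain_name_in_supp:
  assumes tr: "(q, Some (Plain a), q') \<in> T"
  shows "a \<in> supp act q"
proof (rule ccontr)
  assume "a \<notin> supp act q"
  have q: "q \<in> Q" using trans_states[OF tr] by simp
  have "(d, act \<langle>a \<leftrightarrow> d\<rangle> q') \<in> {(a, q'). (q, Some (Plain a), q') \<in> T}" if "d \<notin> supp act q" for d
    using trans_eqvt[OF tr, of "\<langle>a \<leftrightarrow> d\<rangle>"] act_swap_fresh[OF q \<open>a \<notin> supp act q\<close> that] by simp
  then have "UNIV - supp act q \<subseteq> fst ` {(a, q'). (q, Some (Plain a), q') \<in> T}"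
    by (force intro: image_eqI[of _ fst])
  moreover have "infinite (UNIV - supp act q)"
    using q by (simp add: Diff_infinite_finite infinite_UNIV_nat)
  ultimately show False using finite_plain_trans[OF q] by (meson finite_imageI finite_subset)
qed

lemma supp_plain_succ:
  assumes tr: "(q, Some (Plain a), q') \<in> T"
  shows "supp act q' \<subseteq> supp act q"
proof
  fix x assume x: "x \<in> supp act q'"
  have q: "q \<in> Q" "q' \<in> Q" using trans_states[OF tr] by auto
  show "x \<in> supp act q"
  proof (rule ccontr)
    assume nx: "x \<notin> supp act q"
    have "act \<langle>x \<leftrightarrow> d\<rangle> q' \<in> snd ` {(a, q'). (q, Some (Plain a), q') \<in> T}" if "d \<notin> supp act q" for d
    proof -
      have "\<langle>x \<leftrightarrow> d\<rangle> \<langle>$\<rangle> a = a" using plain_name_in_supp[OF tr] nx that by (metis apply_swap_same)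
      then have "(a, act \<langle>x \<leftrightarrow> d\<rangle> q') \<in> {(a, q'). (q, Some (Plain a), q') \<in> T}"
        using trans_eqvt[OF tr, of "\<langle>x \<leftrightarrow> d\<rangle>"] act_swap_fresh[OF q(1) nx that] by simp
      then show ?thesis by (rule rev_image_eqI) simp
    qed
    then have "(\<lambda>d. act \<langle>x \<leftrightarrow> d\<rangle> q') ` (UNIV - (supp act q \<union> supp act q'))
        \<subseteq> snd ` {(a, q'). (q, Some (Plain a), q') \<in> T}"
      by blast
    then show False
      using infinite_swap_images[OF q(2) x, of "supp act q"] finite_plain_trans[OF q(1)] q(1)
      by (meson finite_imageI finite_subset finite_supp)
  qed
qed

lemma supp_bar_succ:
  assumes tr: "(q, Some (Bar c), q') \<in> T"
  shows "supp act q' \<subseteq> insert c (supp act q)"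
proof
  fix x assume x: "x \<in> supp act q'"
  have q: "q \<in> Q" "q' \<in> Q" using trans_states[OF tr] by auto
  show "x \<in> insert c (supp act q)"
  proof (rule ccontr)
    assume nx: "x \<notin> insert c (supp act q)"
    let ?succs = "(\<lambda>d. act \<langle>x \<leftrightarrow> d\<rangle> q') ` (UNIV - (insert c (supp act q) \<union> supp act q'))"
    have "abs_class act Q c (act \<langle>x \<leftrightarrow> d\<rangle> q')
        \<in> (\<lambda>(a, q'). abs_class act Q a q') ` {(a, q'). (q, Some (Bar a), q') \<in> T}"
      if "d \<notin> insert c (supp act q) \<union> supp act q'" for d
    proof -
      have "\<langle>x \<leftrightarrow> d\<rangle> \<langle>$\<rangle> c = c" "act \<langle>x \<leftrightarrow> d\<rangle> q = q"
        using that nx act_swap_fresh[OF q(1)] by auto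
      then have "(q, Some (Bar c), act \<langle>x \<leftrightarrow> d\<rangle> q') \<in> T"
        using trans_eqvt[OF tr, of "\<langle>x \<leftrightarrow> d\<rangle>"] by simp
      then show ?thesis by (intro image_eqI[of _ _ "(c, act \<langle>x \<leftrightarrow> d\<rangle> q')"]) auto
    qed
    then have "abs_class act Q c ` ?succs
        \<subseteq> (\<lambda>(a, q'). abs_class act Q a q') ` {(a, q'). (q, Some (Bar a), q') \<in> T}"
      by blast
    moreover have "infinite (abs_class act Q c ` ?succs)"
    proof -
      have "?succs \<subseteq> Q" using q(2) by auto
      then have "inj_on (abs_class act Q c) ?succs" by (rule inj_on_subset[OF inj_on_abs_class])
      then show ?thesis
        using infinite_swap_images[OF q(2) x, of "insert c (supp act q)"] q(1)
        by (simp add: finite_image_iff)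
    qed
    ultimately show False using finite_bar_trans[OF q(1)] finite_subset by blast
  qed
qed

lemma steps_states: "steps T q w r \<Longrightarrow> q \<in> Q \<Longrightarrow> r \<in> Q"
  by (induction rule: steps.induct) (auto dest: trans_states)

lemma steps_eqvt: "steps T q w r \<Longrightarrow> steps T (act p q) (perm_bs p w) (act p r)"
proof (induction rule: steps.induct)
  case (steps_eps q q' w q'')
  then show ?case using trans_eqvt[of q None q' p] by (auto intro: steps.steps_eps)
next
  case (steps_letter q \<sigma> q' w q'')
  then show ?case using trans_eqvt[of q "Some \<sigma>" q' p] by (auto intro: steps.steps_letter)
qed (simp add: steps.steps_nil)

lemma supp_eps_steps: "steps T q [] r \<Longrightarrow> supp act r \<subseteq> supp act q"
proof (induction q "[] :: bletter list" r rule: steps.induct)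
  case (steps_eps q q' q'')
  then show ?case using supp_eps_succ by blast
qed simp

lemma steps_Cons_iff:
  "steps T q (x # v) r \<longleftrightarrow> (\<exists>p0 p'. steps T q [] p0 \<and> (p0, Some x, p') \<in> T \<and> steps T p' v r)"
proof
  show "steps T q (x # v) r \<Longrightarrow> \<exists>p0 p'. steps T q [] p0 \<and> (p0, Some x, p') \<in> T \<and> steps T p' v r"
  proof (induction q "x # v" r rule: steps.induct)
    case (steps_eps q q' q'')
    then show ?case by (meson steps.steps_eps)
  next
    case (steps_letter q q' q'')
    then show ?case by (auto intro: steps.steps_nil)
  qed
next
  assume "\<exists>p0 p'. steps T q [] p0 \<and> (p0, Some x, p') \<in> T \<and> steps T p' v r"
  then obtain p0 p' where "steps T q [] p0" "(p0, Some x, p') \<in> T" "steps T p' v r" by blast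
  then show "steps T q (x # v) r"
    by (induction q "[] :: bletter list" p0 rule: steps.induct) (auto intro: steps.intros)
qed

definition eps_closure :: "'q \<Rightarrow> 'q set" where
  "eps_closure q = {r. steps T q [] r}"

definition top_reachable :: "'q \<Rightarrow> bool" where
  "top_reachable q \<longleftrightarrow> (\<exists>r\<in>eps_closure q. f r = FTop)"

definition lang :: "'q \<Rightarrow> bletter list set" where
  "lang q = {w. (\<exists>r. steps T q w r \<and> f r = F1) \<or> (\<exists>v u r. w = v @ u \<and> steps T q v r \<and> f r = FTop)}"

definition alpha_lang :: "'q \<Rightarrow> bletter list set" where
  "alpha_lang q = {w. \<exists>w'. alpha_eq w w' \<and> w' \<in> lang q}"

lemma supp_eps_closure: "r \<in> eps_closure q \<Longrightarrow> supp act r \<subseteq> supp act q"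
  unfolding eps_closure_def by (rule supp_eps_steps) simp

lemma lang_top:
  assumes "top_reachable q"
  shows "w \<in> lang q"
proof -
  obtain r where "steps T q [] r" "f r = FTop"
    using assms unfolding top_reachable_def eps_closure_def by blast
  then show ?thesis unfolding lang_def
    by (intro CollectI disjI2 exI[of _ "[]"] exI[of _ w] exI[of _ r]) simp
qed

lemma Nil_in_lang_iff: "[] \<in> lang q \<longleftrightarrow> (\<exists>r\<in>eps_closure q. f r = F1 \<or> f r = FTop)"
  unfolding lang_def eps_closure_def by auto

lemma Cons_in_langD:
  assumes "x # v \<in> lang q"
  shows "top_reachable q \<or> (\<exists>p0\<in>eps_closure q. \<exists>p'. (p0, Some x, p') \<in> T \<and> v \<in> lang p')"
proof -
  from assms consider r where "steps T q (x # v) r" "f r = F1"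
    | v0 u r where "x # v = v0 @ u" "steps T q v0 r" "f r = FTop"
    unfolding lang_def by blast
  then show ?thesis
  proof cases
    case 1
    then show ?thesis unfolding steps_Cons_iff eps_closure_def lang_def by blast
  next
    case (2 v0 u r)
    show ?thesis
    proof (cases v0)
      case Nil
      then show ?thesis using 2 unfolding top_reachable_def eps_closure_def by auto
    next
      case (Cons y v1)
      then have "v = v1 @ u" "steps T q (x # v1) r" using 2 by auto
      then show ?thesis unfolding steps_Cons_iff eps_closure_def lang_def using 2 by blast
    qed
  qed
qed

lemma Cons_in_langI:
  assumes p0: "p0 \<in> eps_closure q" and tr: "(p0, Some x, p') \<in> T" and v: "v \<in> lang p'"
  shows "x # v \<in> lang q"
proof -
  have step: "steps T q (x # v0) r" if "steps T p' v0 r" for v0 r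
    using p0 tr that unfolding eps_closure_def steps_Cons_iff by blast
  from v consider r where "steps T p' v r" "f r = F1"
    | v0 u r where "v = v0 @ u" "steps T p' v0 r" "f r = FTop"
    unfolding lang_def by blast
  then show ?thesis
  proof cases
    case 1
    then show ?thesis unfolding lang_def using step by blast
  next
    case (2 v0 u r)
    then show ?thesis unfolding lang_def using step[OF 2(2)]
      by (intro CollectI disjI2 exI[of _ "x # v0"] exI[of _ u] exI[of _ r]) simp
  qed
qed

lemma Cons_in_lang_iff:
  "x # v \<in> lang q \<longleftrightarrow>
     top_reachable q \<or> (\<exists>p0\<in>eps_closure q. \<exists>p'. (p0, Some x, p') \<in> T \<and> v \<in> lang p')"
  using Cons_in_langD Cons_in_langI lang_top by blast

lemma lang_eqvt:
  assumes q: "q \<in> Q" and w: "w \<in> lang q"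
  shows "perm_bs p w \<in> lang (act p q)"
proof -
  from w consider r where "steps T q w r" "f r = F1"
    | v u r where "w = v @ u" "steps T q v r" "f r = FTop"
    unfolding lang_def by blast
  then show ?thesis
  proof cases
    case 1
    then show ?thesis
      using steps_eqvt[OF 1(1), of p] final_eqvt[OF steps_states[OF 1(1) q]]
      unfolding lang_def by auto
  next
    case (2 v u r)
    then have "steps T (act p q) (perm_bs p v) (act p r)" "f (act p r) = FTop"
      using steps_eqvt final_eqvt[OF steps_states[OF 2(2) q]] by auto
    then show ?thesis unfolding lang_def using 2(1) by auto
  qed
qed

lemma alpha_lang_eqvt: "q \<in> Q \<Longrightarrow> w \<in> alpha_lang q \<Longrightarrow> perm_bs p w \<in> alpha_lang (act p q)"
  unfolding alpha_lang_def using alpha_eq_eqvt lang_eqvt by blast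

lemma alpha_lang_alpha_eq: "alpha_eq w w' \<Longrightarrow> w' \<in> alpha_lang q \<Longrightarrow> w \<in> alpha_lang q"
  unfolding alpha_lang_def using alpha_eq.alpha_trans by blast

lemma lang_subset_alpha_lang: "w \<in> lang q \<Longrightarrow> w \<in> alpha_lang q"
  unfolding alpha_lang_def using alpha_eq.alpha_refl by blast

lemma Nil_in_alpha_lang_iff: "[] \<in> alpha_lang q \<longleftrightarrow> [] \<in> lang q"
  unfolding alpha_lang_def using alpha_eq_NilD alpha_eq.alpha_refl by blast

lemma alpha_lang_top: "top_reachable q \<Longrightarrow> w \<in> alpha_lang q"
  using lang_top lang_subset_alpha_lang by blast

lemma Plain_Cons_in_alpha_lang_iff:
  "Plain a # v \<in> alpha_lang q \<longleftrightarrow>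
     top_reachable q \<or> (\<exists>p0\<in>eps_closure q. \<exists>p'. (p0, Some (Plain a), p') \<in> T \<and> v \<in> alpha_lang p')"
proof
  assume "Plain a # v \<in> alpha_lang q"
  then obtain v' where "alpha_eq v v'" "Plain a # v' \<in> lang q"
    unfolding alpha_lang_def using alpha_eq_PlainD by blast
  then show "top_reachable q \<or>
      (\<exists>p0\<in>eps_closure q. \<exists>p'. (p0, Some (Plain a), p') \<in> T \<and> v \<in> alpha_lang p')"
    unfolding Cons_in_lang_iff alpha_lang_def by blast
next
  assume "top_reachable q \<or>
      (\<exists>p0\<in>eps_closure q. \<exists>p'. (p0, Some (Plain a), p') \<in> T \<and> v \<in> alpha_lang p')"
  then show "Plain a # v \<in> alpha_lang q"
  proof
    assume "top_reachable q"
    then show ?thesis by (rule alpha_lang_top)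
  next
    assume "\<exists>p0\<in>eps_closure q. \<exists>p'. (p0, Some (Plain a), p') \<in> T \<and> v \<in> alpha_lang p'"
    then obtain p0 p' v' where "p0 \<in> eps_closure q" "(p0, Some (Plain a), p') \<in> T"
      "alpha_eq v v'" "v' \<in> lang p'"
      unfolding alpha_lang_def by blast
    then have "Plain a # v' \<in> lang q" "alpha_eq (Plain a # v) (Plain a # v')"
      unfolding Cons_in_lang_iff by (auto intro: alpha_eq_Cons)
    then show ?thesis unfolding alpha_lang_def by blast
  qed
qed

lemma Bar_Cons_in_alpha_langD:
  "Bar b # v \<in> alpha_lang q \<Longrightarrow> top_reachable q \<or>
     (\<exists>p0\<in>eps_closure q. \<exists>c p' u. (p0, Some (Bar c), p') \<in> T \<and> u \<in> lang p'
        \<and> alpha_eq (Bar b # v) (Bar c # u))"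
proof -
  assume "Bar b # v \<in> alpha_lang q"
  then obtain w' where w': "alpha_eq (Bar b # v) w'" "w' \<in> lang q" unfolding alpha_lang_def by blast
  then obtain c u where "w' = Bar c # u" using alpha_eq_BarD by blast
  then show ?thesis using w' Cons_in_lang_iff[of "Bar c" u q] by blast
qed

lemma Bar_Cons_in_alpha_langI:
  "p0 \<in> eps_closure q \<Longrightarrow> (p0, Some (Bar c), p') \<in> T \<Longrightarrow> v \<in> alpha_lang p' \<Longrightarrow>
     Bar c # v \<in> alpha_lang q"
proof -
  assume p0: "p0 \<in> eps_closure q" and tr: "(p0, Some (Bar c), p') \<in> T" and "v \<in> alpha_lang p'"
  then obtain v' where "alpha_eq v v'" "v' \<in> lang p'" unfolding alpha_lang_def by blast
  then have "Bar c # v' \<in> lang q" "alpha_eq (Bar c # v) (Bar c # v')"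
    using p0 tr unfolding Cons_in_lang_iff by (auto intro: alpha_eq_Cons)
  then show ?thesis unfolding alpha_lang_def by blast
qed

end

section \<open>A finite automaton with the same alpha-language\<close>

context ernna
begin

definition supp_bound :: nat where
  "supp_bound = (SOME k. \<forall>q\<in>Q. card (supp act q) \<le> k)"

text \<open>The pool has one name more than any support, so every state has a fresh name in it.\<close>

definition name_pool :: "name set" where
  "name_pool = {..supp_bound}"

definition small_states :: "'q set" where
  "small_states = {q\<in>Q. supp act q \<subseteq> name_pool}"

lemma finite_name_pool [simp]: "finite name_pool"
  by (simp add: name_pool_def)

lemma fresh_in_name_pool:
  assumes q: "q \<in> Q"
  obtains c where "c \<in> name_pool" "c \<notin> supp act q"
proof -
  have "card (supp act q) \<le> supp_bound"
    using someI_ex[OF card_supp_bounded[OF orbit_finite_states]] q unfolding supp_bound_def by blast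
  then have "\<not> name_pool \<subseteq> supp act q"
    using q card_mono[of "supp act q" name_pool] by (auto simp: name_pool_def)
  then show thesis using that by blast
qed

lemma finite_small_states: "finite small_states"
  unfolding small_states_def using orbit_finite_states by (rule finite_supp_within) simp

lemma small_statesD: "q \<in> small_states \<Longrightarrow> q \<in> Q" "q \<in> small_states \<Longrightarrow> supp act q \<subseteq> name_pool"
  unfolding small_states_def by blast+

lemma start_small: "s \<in> small_states"
  unfolding small_states_def using start_state supp_start by simp

text \<open>Bar letters are restricted to pool names fresh for the source: by alpha-invariance of
  the transition relation every bar transition can be renamed into such a one.\<close>

definition small_trans :: "'q \<Rightarrow> (bletter \<times> 'q) set" where
  "small_trans q = {(x, p). \<exists>p0\<in>eps_closure q. (p0, Some x, p) \<in> T \<and> p \<in> small_states \<and>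
     (\<forall>c. x = Bar c \<longrightarrow> c \<in> name_pool \<and> c \<notin> supp act q)}"

lemma small_trans_target: "(x, p) \<in> small_trans q \<Longrightarrow> p \<in> small_states"
  unfolding small_trans_def by blast

lemma finite_small_trans:
  assumes q: "q \<in> small_states"
  shows "finite (small_trans q)"
proof -
  have "small_trans q \<subseteq> (Plain ` name_pool \<union> Bar ` name_pool) \<times> small_states"
  proof clarify
    fix x p assume tr: "(x, p) \<in> small_trans q"
    then obtain p0 where p0: "p0 \<in> eps_closure q" "(p0, Some x, p) \<in> T" "p \<in> small_states"
      "\<forall>c. x = Bar c \<longrightarrow> c \<in> name_pool"
      unfolding small_trans_def by blast
    have "bl_name x \<in> name_pool"
    proof (cases x)
      case (Plain a)
      then show ?thesis
        using plain_name_in_supp[of p0 a p] p0(2) supp_eps_closure[OF p0(1)] small_statesD(2)[OF q]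
        by auto
    qed (use p0 in simp)
    then show "x \<in> Plain ` name_pool \<union> Bar ` name_pool \<and> p \<in> small_states"
      using p0(3) by (cases x) auto
  qed
  moreover have "finite ((Plain ` name_pool \<union> Bar ` name_pool) \<times> small_states)"
    using finite_small_states by simp
  ultimately show ?thesis by (rule finite_subset)
qed

lemma Plain_small_trans_iff:
  assumes q: "q \<in> small_states"
  shows "(Plain a, p) \<in> small_trans q \<longleftrightarrow> (\<exists>p0\<in>eps_closure q. (p0, Some (Plain a), p) \<in> T)"
proof
  assume "\<exists>p0\<in>eps_closure q. (p0, Some (Plain a), p) \<in> T"
  then obtain p0 where p0: "p0 \<in> eps_closure q" "(p0, Some (Plain a), p) \<in> T" by blast
  have "supp act p \<subseteq> name_pool"
    using supp_plain_succ[OF p0(2)] supp_eps_closure[OF p0(1)] small_statesD(2)[OF q] by blast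
  then have "p \<in> small_states" unfolding small_states_def using trans_states[OF p0(2)] by blast
  then show "(Plain a, p) \<in> small_trans q" unfolding small_trans_def using p0 by blast
qed (auto simp: small_trans_def)

lemma FN_Dia_small_trans:
  assumes tr: "(x, p) \<in> small_trans q" and "FN_form \<phi> \<subseteq> supp act p"
  shows "FN_form (Dia x \<phi>) \<subseteq> supp act q"
proof -
  obtain p0 where p0: "p0 \<in> eps_closure q" "(p0, Some x, p) \<in> T"
    using tr unfolding small_trans_def by blast
  have "supp act p0 \<subseteq> supp act q" by (rule supp_eps_closure[OF p0(1)])
  then show ?thesis
  proof (cases x)
    case (Plain a)
    then show ?thesis
      using assms(2) plain_name_in_supp[of p0 a p] supp_plain_succ[of p0 a p] p0(2)
        \<open>supp act p0 \<subseteq> supp act q\<close>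
      by auto
  next
    case (Bar c)
    then show ?thesis using assms(2) supp_bar_succ[of p0 c p] p0(2) \<open>supp act p0 \<subseteq> supp act q\<close>
      by auto
  qed
qed

end

section \<open>The formula of an automaton\<close>

context ernna
begin

definition state_var :: "'q \<Rightarrow> nat" where
  "state_var = (SOME g. inj_on g small_states)"

lemma inj_state_var: "inj_on state_var small_states"
proof -
  obtain g :: "'q \<Rightarrow> nat" where "inj_on g small_states"
    using finite_imp_inj_to_nat_seg[OF finite_small_states] by blast
  then show ?thesis unfolding state_var_def by (rule someI[of "\<lambda>g. inj_on g small_states"])
qed

definition small_trans_list :: "'q \<Rightarrow> (bletter \<times> 'q) list" where
  "small_trans_list q = (SOME xs. set xs = small_trans q)"

definition supp_list :: "'q \<Rightarrow> name list" where
  "supp_list q = (SOME xs. set xs = supp act q)"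

lemma set_small_trans_list: "q \<in> small_states \<Longrightarrow> set (small_trans_list q) = small_trans q"
  unfolding small_trans_list_def by (rule someI_ex) (rule finite_list[OF finite_small_trans])

lemma set_supp_list: "q \<in> Q \<Longrightarrow> set (supp_list q) = supp act q"
  unfolding supp_list_def by (rule someI_ex) (rule finite_list[OF finite_supp])

definition accept_form :: "'q \<Rightarrow> form" where
  "accept_form q =
     (if top_reachable q then true_form
      else if \<exists>r\<in>eps_closure q. f r = F1 then Eps
      else false_form)"

text \<open>No word satisfies the padding; it makes the free names of the formula of a state equal
  to the support of the state, which is what the annotation of its fixpoint variable says.\<close>

definition supp_padding :: "'q \<Rightarrow> form" where
  "supp_padding q = disj_list (map (\<lambda>a. Conj false_form (Dia (Plain a) false_form)) (supp_list q))"

definition state_body :: "'q \<Rightarrow> ('q \<Rightarrow> form) \<Rightarrow> form" where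
  "state_body q g = Disj (accept_form q)
     (Disj (supp_padding q) (disj_list (map (\<lambda>(x, p). Dia x (g p)) (small_trans_list q))))"

text \<open>The tree unfolding of the finite automaton from q along simple paths: a successor that
  already occurs on the path becomes the variable of its mu-binder. The depth bound n never
  cuts a branch once n + length path reaches the number of small states.\<close>

fun unfold_form :: "nat \<Rightarrow> 'q list \<Rightarrow> 'q \<Rightarrow> form" where
  "unfold_form 0 path q = false_form"
| "unfold_form (Suc n) path q = Mu (state_var q) (state_body q (\<lambda>p.
     if p \<in> set (q # path) then Var (state_var p) (supp act p) else unfold_form n (q # path) p))"

abbreviation unfold_succ :: "nat \<Rightarrow> 'q list \<Rightarrow> 'q \<Rightarrow> 'q \<Rightarrow> form" where
  "unfold_succ n path q p \<equiv>
     if p \<in> set (q # path) then Var (state_var p) (supp act p) else unfold_form n (q # path) p"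

lemma sat_accept_form:
  "sat S w (accept_form q) \<longleftrightarrow> top_reachable q \<or> (w = [] \<and> (\<exists>r\<in>eps_closure q. f r = F1))"
  by (simp add: accept_form_def)

lemma sat_state_body:
  "q \<in> small_states \<Longrightarrow>
     sat S w (state_body q g) \<longleftrightarrow>
       sat S w (accept_form q) \<or> (\<exists>(x, p)\<in>small_trans q. sat S w (Dia x (g p)))"
  by (auto simp: state_body_def supp_padding_def sat_disj_list set_small_trans_list)

lemma msubst_state_body: "msubst \<sigma> (state_body q g) = state_body q (\<lambda>p. msubst \<sigma> (g p))"
proof -
  have "msubst \<sigma> (accept_form q) = accept_form q" "msubst \<sigma> (supp_padding q) = supp_padding q"
    by (simp_all add: msubst_fresh accept_form_def true_form_def false_form_def
        supp_padding_def fvars_disj_list)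
  then show ?thesis by (simp add: state_body_def msubst_disj_list comp_def case_prod_unfold)
qed

lemma subst_state_body: "subst X t (state_body q g) = state_body q (\<lambda>p. subst X t (g p))"
proof -
  have "subst X t (accept_form q) = accept_form q" "subst X t (supp_padding q) = supp_padding q"
    by (simp_all add: subst_fresh accept_form_def true_form_def false_form_def
        supp_padding_def fvars_disj_list)
  then show ?thesis by (simp add: state_body_def subst_disj_list comp_def case_prod_unfold)
qed

lemma fvars_state_body:
  "q \<in> small_states \<Longrightarrow> fvars (state_body q g) = (\<Union>(x, p)\<in>small_trans q. fvars (g p))"
  by (auto simp: state_body_def fvars_disj_list set_small_trans_list accept_form_def
      true_form_def false_form_def supp_padding_def)

lemma names_state_body:
  "q \<in> small_states \<Longrightarrow> names_form (state_body q g) =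
     supp act q \<union> (\<Union>(x, p)\<in>small_trans q. insert (bl_name x) (names_form (g p)))"
  by (auto simp: state_body_def names_disj_list set_small_trans_list accept_form_def
      true_form_def false_form_def supp_padding_def set_supp_list small_statesD)

lemma FN_state_body:
  "q \<in> small_states \<Longrightarrow> FN_form (state_body q g) =
     supp act q \<union> (\<Union>(x, p)\<in>small_trans q. FN_form (Dia x (g p)))"
  by (auto simp: state_body_def FN_disj_list set_small_trans_list accept_form_def
      true_form_def false_form_def supp_padding_def set_supp_list small_statesD)

lemma guarded_state_body:
  "q \<in> small_states \<Longrightarrow> guarded (state_body q g) \<longleftrightarrow> (\<forall>(x, p)\<in>small_trans q. guarded (g p))"
  by (auto simp: state_body_def guarded_disj_list set_small_trans_list accept_form_def
      true_form_def false_form_def supp_padding_def)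

lemma not_unguarded_state_body: "\<not> unguarded X (state_body q g)"
  by (auto simp: state_body_def unguarded_disj_list accept_form_def
      true_form_def false_form_def supp_padding_def)

lemma well_annotated_state_body:
  "q \<in> small_states \<Longrightarrow>
     well_annotated \<Gamma> (state_body q g) \<longleftrightarrow> (\<forall>(x, p)\<in>small_trans q. well_annotated \<Gamma> (g p))"
  by (auto simp: state_body_def well_annotated_disj_list set_small_trans_list accept_form_def
      true_form_def false_form_def supp_padding_def)

lemma fvars_unfold_form:
  "q \<in> small_states \<Longrightarrow> fvars (unfold_form n path q) \<subseteq> state_var ` set path"
proof (induction n arbitrary: path q)
  case (Suc n)
  have "fvars (unfold_succ n path q p) \<subseteq> state_var ` set (q # path)"
    if "(x, p) \<in> small_trans q" for x p
    using Suc.IH[of p "q # path"] small_trans_target[OF that] by auto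
  then show ?case using Suc.prems by (fastforce simp: fvars_state_body)
qed (simp add: false_form_def)

lemma finite_names_unfold_form:
  "q \<in> small_states \<Longrightarrow> finite (names_form (unfold_form n path q))"
proof (induction n arbitrary: path q)
  case (Suc n)
  have "finite (names_form (unfold_succ n path q p))" if "(x, p) \<in> small_trans q" for x p
    using Suc.IH[OF small_trans_target[OF that]] small_statesD(1)[OF small_trans_target[OF that]]
    by simp
  then show ?case
    using Suc.prems finite_small_trans[OF Suc.prems] small_statesD(1)[OF Suc.prems]
    by (auto simp: names_state_body)
qed (simp add: false_form_def)

lemma FN_unfold_form_subset:
  "q \<in> small_states \<Longrightarrow> FN_form (unfold_form n path q) \<subseteq> supp act q"
proof (induction n arbitrary: path q)
  case (Suc n)
  have "FN_form (Dia x (unfold_succ n path q p)) \<subseteq> supp act q" if "(x, p) \<in> small_trans q" for x p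
    using that Suc.IH[OF small_trans_target[OF that]] by (intro FN_Dia_small_trans) auto
  then show ?case using Suc.prems by (auto simp: FN_state_body)
qed (simp add: false_form_def)

lemma FN_unfold_form_Suc:
  "q \<in> small_states \<Longrightarrow> FN_form (unfold_form (Suc n) path q) = supp act q"
  using FN_unfold_form_subset[of q "Suc n" path] by (auto simp: FN_state_body)

lemma guarded_unfold_form: "q \<in> small_states \<Longrightarrow> guarded (unfold_form n path q)"
proof (induction n arbitrary: path q)
  case (Suc n)
  have "guarded (unfold_succ n path q p)" if "(x, p) \<in> small_trans q" for x p
    using Suc.IH[of p "q # path"] small_trans_target[OF that] by simp
  then have "guarded (state_body q (unfold_succ n path q))"
    using guarded_state_body[OF Suc.prems] by blast
  then show ?case by (simp add: not_unguarded_state_body)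
qed (simp add: false_form_def)

lemma well_annotated_unfold_form:
  assumes "q \<in> small_states" and "set path \<subseteq> small_states"
    and "\<forall>p\<in>set path. \<Gamma> (state_var p) = Some (supp act p)"
  shows "well_annotated \<Gamma> (unfold_form n path q)"
  using assms
proof (induction n arbitrary: path q \<Gamma>)
  case (Suc n)
  let ?\<Gamma> = "\<Gamma>(state_var q \<mapsto> supp act q)"
  have env: "?\<Gamma> (state_var p) = Some (supp act p)" if "p \<in> set (q # path)" for p
  proof (cases "p = q")
    case False
    then have "state_var p \<noteq> state_var q"
      using that Suc.prems(1,2) inj_state_var by (metis inj_onD set_ConsD subsetD)
    then show ?thesis using that False Suc.prems(3) by simp
  qed simp
  have "well_annotated ?\<Gamma> (unfold_succ n path q p)" if "(x, p) \<in> small_trans q" for x p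
  proof (cases "p \<in> set (q # path)")
    case False
    have "well_annotated ?\<Gamma> (unfold_form n (q # path) p)"
      using Suc.prems(1,2) env by (intro Suc.IH small_trans_target[OF that]) auto
    then show ?thesis using False by simp
  qed (use env in simp)
  then have "well_annotated ?\<Gamma> (state_body q (unfold_succ n path q))"
    using well_annotated_state_body[OF Suc.prems(1)] by blast
  then show ?case using FN_unfold_form_Suc[OF Suc.prems(1), of n path] by simp
qed (simp add: false_form_def)

end

section \<open>Correctness of the formula\<close>

context ernna
begin

definition approximates :: "nat \<Rightarrow> form \<Rightarrow> 'q \<Rightarrow> bool" where
  "approximates m \<psi> p \<longleftrightarrow>
     finite (names_form \<psi>) \<and> (\<forall>S w. length w < m \<longrightarrow> (sat S w \<psi> \<longleftrightarrow> w \<in> alpha_lang p))"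

lemma approximates_Suc_imp: "approximates (Suc m) \<psi> p \<Longrightarrow> approximates m \<psi> p"
  unfolding approximates_def by auto

lemma alpha_lang_if_sat_Dia_Bar:
  assumes q: "q \<in> Q" and p0: "p0 \<in> eps_closure q" and tr: "(p0, Some (Bar c), p) \<in> T"
    and c: "c \<notin> supp act q" and approx: "approximates m \<psi> p"
    and sat: "sat S w (Dia (Bar c) \<psi>)" and len: "length w \<le> m"
  shows "w \<in> alpha_lang q"
proof -
  have "fin_supp perm_form \<psi>" using approx by (simp add: approximates_def fin_supp_form)
  then obtain d v where d: "d \<notin> supp act q" and al: "alpha_eq w (Bar d # v)"
    and sat_v: "sat S (perm_bs \<langle>c \<leftrightarrow> d\<rangle> v) \<psi>"
    by (rule sat_Dia_Bar_freshE[OF sat _ finite_supp[OF q]])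
  have "length v < m" using alpha_eq_length[OF al] len by simp
  then have "perm_bs \<langle>c \<leftrightarrow> d\<rangle> v \<in> alpha_lang p" using approx sat_v by (simp add: approximates_def)
  then have "Bar c # perm_bs \<langle>c \<leftrightarrow> d\<rangle> v \<in> alpha_lang q" by (rule Bar_Cons_in_alpha_langI[OF p0 tr])
  from alpha_lang_eqvt[OF q this, of "\<langle>c \<leftrightarrow> d\<rangle>"]
  have "Bar d # v \<in> alpha_lang (act \<langle>c \<leftrightarrow> d\<rangle> q)" by simp
  then have "Bar d # v \<in> alpha_lang q" using act_swap_fresh[OF q c d] by simp
  with al show ?thesis by (rule alpha_lang_alpha_eq)
qed

lemma small_trans_renamed_bar:
  assumes q: "q \<in> small_states" and p0: "p0 \<in> eps_closure q" and tr: "(p0, Some (Bar c0), p') \<in> T"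
    and c: "c \<in> name_pool" "c \<notin> supp act q"
  shows "(Bar c, act \<langle>c0 \<leftrightarrow> c\<rangle> p') \<in> small_trans q"
proof -
  have p': "p' \<in> Q" using trans_states[OF tr] by simp
  have supp_p': "supp act p' \<subseteq> insert c0 (supp act q)"
    using supp_bar_succ[OF tr] supp_eps_closure[OF p0] by blast
  then have "abs_eq act c0 p' c (act \<langle>c0 \<leftrightarrow> c\<rangle> p')"
    using c(2) by (intro abs_eq_swap[OF p']) auto
  then have "(p0, Some (Bar c), act \<langle>c0 \<leftrightarrow> c\<rangle> p') \<in> T"
    using bar_trans_alpha[OF tr] p' by simp
  moreover have "\<langle>c0 \<leftrightarrow> c\<rangle> \<langle>$\<rangle> y \<in> name_pool" if "y \<in> supp act p'" for y
  proof (cases "y = c0")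
    case False
    then have "y \<in> supp act q" using that supp_p' by blast
    then have "y \<noteq> c" "y \<in> name_pool" using c small_statesD(2)[OF q] by auto
    then show ?thesis using False by simp
  qed (use c in simp)
  then have "supp act (act \<langle>c0 \<leftrightarrow> c\<rangle> p') \<subseteq> name_pool" using p' by (auto simp: supp_act)
  ultimately show ?thesis
    unfolding small_trans_def small_states_def using p0 p' c by auto
qed

lemma lang_swap_bound_name:
  assumes p': "p' \<in> Q" and u: "u \<in> lang p'"
    and d: "d \<notin> supp act p'" and c: "c \<notin> supp act p' \<or> c = c0"
  shows "perm_bs \<langle>c \<leftrightarrow> d\<rangle> (perm_bs \<langle>c0 \<leftrightarrow> d\<rangle> u) \<in> lang (act \<langle>c0 \<leftrightarrow> c\<rangle> p')"
proof -
  have "act \<langle>c \<leftrightarrow> d\<rangle> (act \<langle>c0 \<leftrightarrow> d\<rangle> p') = act \<langle>c0 \<leftrightarrow> c\<rangle> p'"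
    unfolding act_mult[symmetric, OF p']
  proof (rule act_cong_supp[OF p'], intro ballI)
    fix x assume x: "x \<in> supp act p'"
    show "(\<langle>c \<leftrightarrow> d\<rangle> * \<langle>c0 \<leftrightarrow> d\<rangle>) \<langle>$\<rangle> x = \<langle>c0 \<leftrightarrow> c\<rangle> \<langle>$\<rangle> x"
    proof (cases "x = c0")
      case False
      then have "x \<noteq> d" "x \<noteq> c" using x c d by auto
      then show ?thesis using False by (simp add: apply_times)
    qed (simp add: apply_times)
  qed
  moreover have "perm_bs \<langle>c \<leftrightarrow> d\<rangle> (perm_bs \<langle>c0 \<leftrightarrow> d\<rangle> u) \<in> lang (act \<langle>c \<leftrightarrow> d\<rangle> (act \<langle>c0 \<leftrightarrow> d\<rangle> p'))"
    using lang_eqvt[OF act_closed[OF p'] lang_eqvt[OF p' u, of "\<langle>c0 \<leftrightarrow> d\<rangle>"]] .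
  ultimately show ?thesis by simp
qed

lemma sat_Dia_Bar_if_alpha_lang:
  assumes q: "q \<in> small_states" and p0: "p0 \<in> eps_closure q"
    and tr: "(p0, Some (Bar c0), p') \<in> T" and u: "u \<in> lang p'"
    and al: "alpha_eq (Bar b # v) (Bar c0 # u)" and len: "length v < m"
    and approx: "\<forall>(x, p)\<in>small_trans q. approximates m (g p) p"
  shows "\<exists>(x, p)\<in>small_trans q. sat S (Bar b # v) (Dia x (g p))"
proof -
  have p': "p' \<in> Q" using trans_states[OF tr] by simp
  obtain c where c: "c \<in> name_pool" "c \<notin> supp act q"
    using fresh_in_name_pool small_statesD(1)[OF q] by blast
  define p where "p = act \<langle>c0 \<leftrightarrow> c\<rangle> p'"
  have trans: "(Bar c, p) \<in> small_trans q"
    unfolding p_def using small_trans_renamed_bar[OF q p0 tr c] .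
  then have approx_p: "approximates m (g p) p" using approx by blast
  then have fin: "fin_supp perm_form (g p)" by (simp add: approximates_def fin_supp_form)
  let ?used = "names_bs v \<union> names_bs u \<union> supp perm_form (g p) \<union> supp act p' \<union> {b, c, c0}"
  obtain d where d: "d \<notin> ?used"
    by (rule obtain_fresh_name[of ?used]) (use fin p' in auto)
  have "alpha_eq (perm_bs \<langle>b \<leftrightarrow> d\<rangle> v) (perm_bs \<langle>c0 \<leftrightarrow> d\<rangle> u)"
    using alpha_eq_BarD[OF al] d by auto
  then have "alpha_eq (perm_bs \<langle>c \<leftrightarrow> d\<rangle> (perm_bs \<langle>b \<leftrightarrow> d\<rangle> v)) (perm_bs \<langle>c \<leftrightarrow> d\<rangle> (perm_bs \<langle>c0 \<leftrightarrow> d\<rangle> u))"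
    by (rule alpha_eq_eqvt)
  moreover have "c \<notin> supp act p' \<or> c = c0"
    using supp_bar_succ[OF tr] supp_eps_closure[OF p0] c(2) by blast
  then have "perm_bs \<langle>c \<leftrightarrow> d\<rangle> (perm_bs \<langle>c0 \<leftrightarrow> d\<rangle> u) \<in> lang p"
    unfolding p_def using d by (intro lang_swap_bound_name[OF p' u]) auto
  ultimately have "perm_bs \<langle>c \<leftrightarrow> d\<rangle> (perm_bs \<langle>b \<leftrightarrow> d\<rangle> v) \<in> alpha_lang p"
    by (rule alpha_lang_alpha_eq[OF _ lang_subset_alpha_lang])
  then have "sat S (perm_bs \<langle>c \<leftrightarrow> d\<rangle> (perm_bs \<langle>b \<leftrightarrow> d\<rangle> v)) (g p)"
    using approx_p len by (simp add: approximates_def)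
  moreover have "alpha_eq (Bar b # v) (Bar d # perm_bs \<langle>b \<leftrightarrow> d\<rangle> v)"
    using d by (intro alpha_eq_rename) auto
  ultimately have "sat S (Bar b # v) (Dia (Bar c) (g p))"
    using fin d by (intro sat_Dia_BarI) auto
  then show ?thesis using trans by blast
qed

lemma alpha_lang_if_sat_Dia_small_trans:
  assumes q: "q \<in> small_states" and tr: "(x, p) \<in> small_trans q" and approx: "approximates m \<psi> p"
    and sat: "sat S w (Dia x \<psi>)" and len: "length w \<le> m"
  shows "w \<in> alpha_lang q"
proof (cases x)
  case (Plain a)
  then obtain v where v: "w = Plain a # v" "sat S v \<psi>" using sat by (auto simp: sat_Dia_Plain_iff)
  then have "v \<in> alpha_lang p" using approx len by (simp add: approximates_def)
  then show ?thesis
    using tr Plain v(1) Plain_Cons_in_alpha_lang_iff Plain_small_trans_iff[OF q] by blast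
next
  case (Bar c)
  then obtain p0 where "p0 \<in> eps_closure q" "(p0, Some (Bar c), p) \<in> T" "c \<notin> supp act q"
    using tr unfolding small_trans_def by blast
  then show ?thesis
    using alpha_lang_if_sat_Dia_Bar[OF small_statesD(1)[OF q]] approx sat len Bar by blast
qed

lemma sat_Dia_small_trans_if_alpha_lang:
  assumes q: "q \<in> small_states" and approx: "\<forall>(x, p)\<in>small_trans q. approximates m (g p) p"
    and w: "x # v \<in> alpha_lang q" and not_top: "\<not> top_reachable q" and len: "length v < m"
  shows "\<exists>(y, p)\<in>small_trans q. sat S (x # v) (Dia y (g p))"
proof (cases x)
  case (Plain a)
  then obtain p where tr: "(Plain a, p) \<in> small_trans q" and v: "v \<in> alpha_lang p"
    using w not_top Plain_Cons_in_alpha_lang_iff Plain_small_trans_iff[OF q] by blast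
  then have "sat S v (g p)" using bspec[OF approx tr] len by (simp add: approximates_def)
  then have "sat S (x # v) (Dia (Plain a) (g p))" using Plain by (simp add: sat_Dia_Plain_iff)
  then show ?thesis using tr by blast
next
  case (Bar b)
  then obtain p0 c0 p' u where "p0 \<in> eps_closure q" "(p0, Some (Bar c0), p') \<in> T"
    "u \<in> lang p'" "alpha_eq (Bar b # v) (Bar c0 # u)"
    using Bar_Cons_in_alpha_langD w not_top by blast
  then show ?thesis using sat_Dia_Bar_if_alpha_lang[OF q] approx len Bar by blast
qed

lemma approximates_state_body:
  assumes q: "q \<in> small_states" and approx: "\<forall>(x, p)\<in>small_trans q. approximates m (g p) p"
    and len: "length w \<le> m"
  shows "sat S w (state_body q g) \<longleftrightarrow> w \<in> alpha_lang q"
proof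
  assume "sat S w (state_body q g)"
  then consider "top_reachable q" | "w = []" "\<exists>r\<in>eps_closure q. f r = F1"
    | x p where "(x, p) \<in> small_trans q" "sat S w (Dia x (g p))"
    using sat_state_body[OF q] sat_accept_form by auto
  then show "w \<in> alpha_lang q"
  proof cases
    case 1
    then show ?thesis by (rule alpha_lang_top)
  next
    case 2
    then show ?thesis using Nil_in_alpha_lang_iff Nil_in_lang_iff by auto
  next
    case (3 x p)
    then show ?thesis using alpha_lang_if_sat_Dia_small_trans[OF q] approx len by blast
  qed
next
  assume w: "w \<in> alpha_lang q"
  show "sat S w (state_body q g)"
  proof (cases "top_reachable q \<or> w = []")
    case True
    then show ?thesis
      using w sat_state_body[OF q] sat_accept_form Nil_in_alpha_lang_iff Nil_in_lang_iff
      unfolding top_reachable_def by auto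
  next
    case False
    then obtain x v where "w = x # v" by (auto simp: neq_Nil_conv)
    then show ?thesis
      using sat_Dia_small_trans_if_alpha_lang[OF q approx] w False len sat_state_body[OF q] by auto
  qed
qed

definition good_env :: "nat \<Rightarrow> (nat \<Rightarrow> form option) \<Rightarrow> 'q list \<Rightarrow> bool" where
  "good_env m \<sigma> path \<longleftrightarrow> (\<forall>Y. Y \<notin> state_var ` set path \<longrightarrow> \<sigma> Y = None) \<and>
     (\<forall>p\<in>set path. \<exists>\<psi>. \<sigma> (state_var p) = Some \<psi> \<and> fvars \<psi> = {} \<and> approximates m \<psi> p)"

lemma good_env_Nil: "good_env m Map.empty []"
  by (simp add: good_env_def)

lemma good_env_Suc_imp: "good_env (Suc m) \<sigma> path \<Longrightarrow> good_env m \<sigma> path"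
  unfolding good_env_def by (meson approximates_Suc_imp)

lemma good_env_closed:
  "good_env m \<sigma> path \<Longrightarrow> \<sigma> Y = Some t \<Longrightarrow> fvars t = {} \<and> finite (names_form t)"
  unfolding good_env_def approximates_def by (cases "Y \<in> state_var ` set path") force+

lemma state_var_notin_path:
  "q \<in> small_states \<Longrightarrow> set path \<subseteq> small_states \<Longrightarrow> q \<notin> set path \<Longrightarrow>
    state_var q \<notin> state_var ` set path"
  by (simp add: inj_on_image_mem_iff[OF inj_state_var])

lemma good_env_Cons:
  assumes env: "good_env m \<sigma> path" and q: "q \<in> small_states" "q \<notin> set path"
    and path: "set path \<subseteq> small_states"
    and \<Phi>: "fvars \<Phi> = {}" "approximates m \<Phi> q"
  shows "good_env m (\<sigma>(state_var q \<mapsto> \<Phi>)) (q # path)"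
  using env \<Phi> state_var_notin_path[OF q(1) path q(2)] unfolding good_env_def by auto

lemma approximates_msubst_Var:
  "good_env m \<sigma> path \<Longrightarrow> p \<in> set path \<Longrightarrow> approximates m (msubst \<sigma> (Var (state_var p) A)) p"
  unfolding good_env_def by auto

lemma closed_msubst_unfold_form:
  assumes q: "q \<in> small_states" and env: "good_env m \<sigma> path"
  shows "fvars (msubst \<sigma> (unfold_form n path q)) = {}"
    and "finite (names_form (msubst \<sigma> (unfold_form n path q)))"
proof -
  have "fvars (msubst \<sigma> (unfold_form n path q)) \<subseteq> {Y\<in>fvars (unfold_form n path q). \<sigma> Y = None}"
    using good_env_closed[OF env] by (intro fvars_msubst) blast
  moreover have "\<sigma> Y \<noteq> None" if "Y \<in> state_var ` set path" for Y
    using that env unfolding good_env_def by force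
  ultimately show "fvars (msubst \<sigma> (unfold_form n path q)) = {}"
    using fvars_unfold_form[OF q, of n path] by blast
  show "finite (names_form (msubst \<sigma> (unfold_form n path q)))"
    using finite_names_unfold_form[OF q] good_env_closed[OF env]
    by (intro finite_names_msubst) blast+
qed

lemma sat_msubst_unfold_form_Suc:
  fixes n :: nat
  assumes env: "good_env m \<sigma> path" and q: "q \<in> small_states"
    and path: "set path \<subseteq> small_states" "q \<notin> set path"
  defines "\<Phi> \<equiv> msubst \<sigma> (unfold_form (Suc n) path q)"
  shows "sat S w \<Phi> \<longleftrightarrow>
    sat S w (state_body q (\<lambda>p. msubst (\<sigma>(state_var q \<mapsto> \<Phi>)) (unfold_succ n path q p)))"
proof -
  let ?X = "state_var q" and ?g = "unfold_succ n path q"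
  have X: "\<sigma> ?X = None"
    using env state_var_notin_path[OF q path] unfolding good_env_def by blast
  then have "\<sigma>(?X := None) = \<sigma>" by auto
  then have \<Phi>_eq: "\<Phi> = Mu ?X (state_body q (\<lambda>p. msubst \<sigma> (?g p)))"
    unfolding \<Phi>_def by (simp add: msubst_state_body)
  have "\<forall>Y t. \<sigma> Y = Some t \<longrightarrow> ?X \<notin> fvars t" using good_env_closed[OF env] by blast
  from subst_msubst[OF this X]
  have "subst ?X \<Phi> (state_body q (\<lambda>p. msubst \<sigma> (?g p))) =
      state_body q (\<lambda>p. msubst (\<sigma>(?X \<mapsto> \<Phi>)) (?g p))"
    by (simp add: subst_state_body)
  with sat_Mu_iff[of S w ?X "state_body q (\<lambda>p. msubst \<sigma> (?g p))"] show ?thesis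
    unfolding \<Phi>_eq[symmetric] by simp
qed

lemma approximates_unfold_form:
  assumes "q \<in> small_states" and "set path \<subseteq> small_states" and "distinct (q # path)"
    and "card small_states \<le> n + length path" and "good_env m \<sigma> path"
  shows "approximates m (msubst \<sigma> (unfold_form n path q)) q"
  using assms
proof (induction m arbitrary: n path q \<sigma>)
  case 0
  then show ?case by (simp add: approximates_def closed_msubst_unfold_form)
next
  case (Suc m)
  note q = Suc.prems(1) and path = Suc.prems(2) and dist = Suc.prems(3) and env = Suc.prems(5)
  have q_notin: "q \<notin> set path" using dist by simp
  have "Suc (length path) \<le> card small_states"
    using card_mono[OF finite_small_states, of "set (q # path)"] q path dist
    by (simp add: distinct_card)
  then obtain n' where n: "n = Suc n'" using Suc.prems(4) by (cases n) auto
  define \<Phi> where "\<Phi> = msubst \<sigma> (unfold_form n path q)"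
  let ?\<sigma>' = "\<sigma>(state_var q \<mapsto> \<Phi>)"
  have \<Phi>_closed: "fvars \<Phi> = {}" "finite (names_form \<Phi>)"
    unfolding \<Phi>_def using closed_msubst_unfold_form[OF q env] by auto
  have "approximates m \<Phi> q"
    unfolding \<Phi>_def using Suc.prems(1-4) good_env_Suc_imp[OF env] by (rule Suc.IH)
  then have env': "good_env m ?\<sigma>' (q # path)"
    by (rule good_env_Cons[OF good_env_Suc_imp[OF env] q q_notin path \<Phi>_closed(1)])
  have "approximates m (msubst ?\<sigma>' (unfold_succ n' path q p)) p" if "(x, p) \<in> small_trans q" for x p
  proof (cases "p \<in> set (q # path)")
    case True
    then show ?thesis using approximates_msubst_Var[OF env'] by simp
  next
    case False
    have "approximates m (msubst ?\<sigma>' (unfold_form n' (q # path) p)) p"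
    proof (rule Suc.IH[OF small_trans_target[OF that] _ _ _ env'])
      show "set (q # path) \<subseteq> small_states" using q path by simp
      show "distinct (p # q # path)" using False dist by simp
      show "card small_states \<le> n' + length (q # path)" using Suc.prems(4) n by simp
    qed
    then show ?thesis using False by simp
  qed
  then have "\<forall>(x, p)\<in>small_trans q. approximates m (msubst ?\<sigma>' (unfold_succ n' path q p)) p"
    by blast
  from approximates_state_body[OF q this]
  have "sat S w \<Phi> \<longleftrightarrow> w \<in> alpha_lang q" if "length w < Suc m" for S w
    using that sat_msubst_unfold_form_Suc[OF env q path q_notin, where n = n']
    unfolding \<Phi>_def n by simp
  then show ?case using \<Phi>_closed unfolding approximates_def \<Phi>_def by blast
qed

definition ernna_formula :: form where
  "ernna_formula = unfold_form (card small_states) [] s"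

lemma bar_formula_ernna_formula: "bar_formula ernna_formula"
  unfolding bar_formula_def ernna_formula_def
  using guarded_unfold_form[OF start_small] well_annotated_unfold_form[OF start_small, of "[]"]
  by simp

lemma FN_ernna_formula: "FN_form ernna_formula = {}"
  unfolding ernna_formula_def using FN_unfold_form_subset[OF start_small] supp_start by blast

lemma sat_ernna_formula_iff: "sat S w ernna_formula \<longleftrightarrow> w \<in> alpha_lang s"
proof -
  have "approximates (Suc (length w)) (msubst Map.empty (unfold_form (card small_states) [] s)) s"
    by (rule approximates_unfold_form) (simp_all add: start_small good_env_Nil)
  moreover have "msubst Map.empty (unfold_form (card small_states) [] s) = ernna_formula"
    unfolding ernna_formula_def by (simp add: msubst_fresh)
  ultimately show ?thesis unfolding approximates_def by simp
qed

lemma L_pre_iff: "(w, x) \<in> L_pre T s f \<longleftrightarrow> (\<exists>r. steps T s w r \<and> f r = x \<and> x \<in> {F1, FTop})"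
  unfolding L_pre_def by blast

lemma L_0_eq: "L_0 T s f = closed_strings {} \<inter> lang s"
  unfolding L_0_def lang_def L_pre_iff by blast

lemma quotient_closed_alpha_lang:
  "(closed_strings N \<inter> alpha_lang q) // alpha_rel = (closed_strings N \<inter> lang q) // alpha_rel"
proof
  show "(closed_strings N \<inter> alpha_lang q) // alpha_rel \<subseteq> (closed_strings N \<inter> lang q) // alpha_rel"
  proof (rule subsetI, elim quotientE)
    fix C w assume w: "w \<in> closed_strings N \<inter> alpha_lang q" and C: "C = alpha_rel `` {w}"
    then obtain w' where w': "alpha_eq w w'" "w' \<in> lang q" unfolding alpha_lang_def by blast
    then have "w' \<in> closed_strings N"
      using w alpha_eq_FN_bs[OF w'(1)] by (simp add: closed_strings_def)
    then show "C \<in> (closed_strings N \<inter> lang q) // alpha_rel"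
      using w' C alpha_rel_class_eq[OF w'(1)] by (auto intro: quotientI)
  qed
  show "(closed_strings N \<inter> lang q) // alpha_rel \<subseteq> (closed_strings N \<inter> alpha_lang q) // alpha_rel"
    using lang_subset_alpha_lang unfolding quotient_def by blast
qed

lemma sem_ernna_formula: "sem ernna_formula = L_alpha T s f"
proof -
  have "{w \<in> closed_strings {}. sat {} w ernna_formula} = closed_strings {} \<inter> alpha_lang s"
    by (auto simp: sat_ernna_formula_iff)
  then show ?thesis
    unfolding sem_def L_alpha_def L_0_eq by (simp add: quotient_closed_alpha_lang)
qed

end

theorem theorem6p6:
  fixes act :: "name perm \<Rightarrow> 'q \<Rightarrow> 'q"
    and Q :: "'q set" and T :: "('q \<times> bletter option \<times> 'q) set" and s :: 'q and f :: "'q \<Rightarrow> fval"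
  assumes "ERNNA act Q T s f"
  shows "\<exists>\<phi>. bar_formula \<phi> \<and> FN_form \<phi> = {} \<and> sem \<phi> = L_alpha T s f"
proof -
  interpret ernna act Q T s f by (rule ernna.intro) (fact assms)
  show ?thesis using bar_formula_ernna_formula FN_ernna_formula sem_ernna_formula by blast
qed

end
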